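(* Let $\mathcal{H}$ be a separable infinite-dimensional Hilbert space and let $\Omega$ be a quantum channel (completely positive trace-preserving map) on the trace-class operators on $\mathcal{H}$ whose associated superoperator $\overline{\Omega}$ on $\mathcal{H}\otimes\mathcal{H}$ satisfies $0\le\overline{\Omega}\le \mathbb{1}$. Suppose that for every density operator $\sigma$ on $\mathcal{H}$ the sequence $(\Omega^N(\sigma))_N$ does not converge in trace norm. Then for every density operator $\sigma$, $\lim_{N\to\infty}\Omega^N(\sigma)=0$ in $S_2$; i.e. $\lim_{N\to\infty}\mathrm{tr}\{\Omega^N(\sigma)|\phi\rangle\langle\psi|\}=0$ for all vectors $|\phi\rangle,|\psi\rangle\in\mathcal{H}$.
   Context: Fixing an orthonormal basis $\{|i\rangle\}$ of $\mathcal{H}$, a Hilbert–Schmidt operator $\sigma=\sum_{ij}\sigma_{ij}|i\rangle\langle j|\in S_2$ is identified with the vector $|\sigma\rangle=\sum_{ij}\sigma_{ij}|i\rangle|j\rangle\in\mathcal{H}\otimes\mathcal{H}$ (so $\mathrm{tr}(\sigma^\dagger\sigma)=\langle\sigma|\sigma\rangle$); $\overline{\Omega}$ is the operator on $\mathcal{H}\otimes\mathcal{H}$ defined by $\overline{\Omega}|\sigma\rangle=|\Omega(\sigma)\rangle$. For instance, for $\Omega(\sigma)=\sum_{x,a}p_xF^x_a\sigma F^x_a$ with projectors $F^x_a$, $\overline{\Omega}=\sum_{x,a}p_xF^x_a\otimes(F^x_a)^*$. $S_2$ denotes the Hilbert–Schmidt operators with norm $\|A\|_2=\sqrt{\mathrm{tr}(A^\dagger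 A)}$. *)

theory Defs
  imports "HOL-Analysis.Analysis"
begin

text \<open>The separable infinite-dimensional Hilbert space H is modelled as l2(nat)
  via the fixed orthonormal basis |i>, i :: nat.  Vectors are coefficient
  sequences, operators are (infinite) matrices in that basis.\<close>

type_synonym vec = "nat \<Rightarrow> complex"
type_synonym mat = "nat \<Rightarrow> nat \<Rightarrow> complex"

definition ell2 :: "vec \<Rightarrow> bool" where
  "ell2 x \<longleftrightarrow> summable (\<lambda>i. (cmod (x i))\<^sup>2)"

definition vnorm :: "vec \<Rightarrow> real" where
  "vnorm x = sqrt (\<Sum>i. (cmod (x i))\<^sup>2)"

definition vinner :: "vec \<Rightarrow> vec \<Rightarrow> complex" where
  "vinner x y = (\<Sum>i. cnj (x i) * y i)"

definition mv :: "mat \<Rightarrow> vec \<Rightarrow> vec" where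
  "mv A x = (\<lambda>i. \<Sum>j. A i j * x j)"

definition mmult :: "mat \<Rightarrow> mat \<Rightarrow> mat" where
  "mmult A B = (\<lambda>i j. \<Sum>k. A i k * B k j)"

definition trace :: "mat \<Rightarrow> complex" where
  "trace A = (\<Sum>i. A i i)"

definition outer :: "vec \<Rightarrow> vec \<Rightarrow> mat" where
  "outer phi psi = (\<lambda>i j. phi i * cnj (psi j))"

definition mdiff :: "mat \<Rightarrow> mat \<Rightarrow> mat" where
  "mdiff A B = (\<lambda>i j. A i j - B i j)"

definition nuclear_rep :: "mat \<Rightarrow> (nat \<Rightarrow> vec) \<Rightarrow> (nat \<Rightarrow> vec) \<Rightarrow> bool" where
  "nuclear_rep A u v \<longleftrightarrow>
     (\<forall>k. ell2 (u k) \<and> ell2 (v k)) \<and>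
     summable (\<lambda>k. vnorm (u k) * vnorm (v k)) \<and>
     (\<forall>i j. (\<lambda>k. u k i * cnj (v k j)) sums A i j)"

definition trace_class :: "mat \<Rightarrow> bool" where
  "trace_class A \<longleftrightarrow> (\<exists>u v. nuclear_rep A u v)"

definition trace_norm :: "mat \<Rightarrow> real" where
  "trace_norm A = Inf {(\<Sum>k. vnorm (u k) * vnorm (v k)) | u v. nuclear_rep A u v}"

definition hs_inner :: "mat \<Rightarrow> mat \<Rightarrow> complex" where
  "hs_inner A B = infsum (\<lambda>(i,j). cnj (A i j) * B i j) UNIV"

definition hs_norm :: "mat \<Rightarrow> real" where
  "hs_norm A = sqrt (infsum (\<lambda>(i,j). (cmod (A i j))\<^sup>2) UNIV)"

definition pos_op :: "mat \<Rightarrow> bool" where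
  "pos_op A \<longleftrightarrow> (\<forall>x. ell2 x \<longrightarrow> vinner x (mv A x) \<in> \<real> \<and> 0 \<le> Re (vinner x (mv A x)))"

definition density :: "mat \<Rightarrow> bool" where
  "density A \<longleftrightarrow> trace_class A \<and> pos_op A \<and> trace A = 1"

text \<open>Positivity of an n x n block operator X = (X a b) on H (x) C^n.\<close>
definition block_pos :: "nat \<Rightarrow> (nat \<Rightarrow> nat \<Rightarrow> mat) \<Rightarrow> bool" where
  "block_pos n X \<longleftrightarrow> (\<forall>x :: nat \<Rightarrow> vec. (\<forall>a<n. ell2 (x a)) \<longrightarrow>
     (let s = (\<Sum>a<n. \<Sum>b<n. vinner (x a) (mv (X a b) (x b))) in s \<in> \<real> \<and> 0 \<le> Re s))"

text \<open>Quantum channel: linear, trace-preserving, completely positive map on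
  the trace-class operators (values outside the trace class are irrelevant).\<close>
definition quantum_channel :: "(mat \<Rightarrow> mat) \<Rightarrow> bool" where
  "quantum_channel \<Omega> \<longleftrightarrow>
     (\<forall>A. trace_class A \<longrightarrow> trace_class (\<Omega> A)) \<and>
     (\<forall>A B c. trace_class A \<longrightarrow> trace_class B \<longrightarrow>
        \<Omega> (\<lambda>i j. A i j + c * B i j) = (\<lambda>i j. \<Omega> A i j + c * \<Omega> B i j)) \<and>
     (\<forall>A. trace_class A \<longrightarrow> trace (\<Omega> A) = trace A) \<and>
     (\<forall>n X. (\<forall>a<n. \<forall>b<n. trace_class (X a b)) \<longrightarrow> block_pos n X \<longrightarrow>
        block_pos n (\<lambda>a b. \<Omega> (X a b)))"

text \<open>0 <= Omega-bar <= 1 for the superoperator Omega-bar |sigma> = |Omega(sigma)>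
  on H (x) H, i.e. 0 <= <sigma|Omega-bar|sigma> <= <sigma|sigma> (and the form is real).\<close>
definition superop_between_0_1 :: "(mat \<Rightarrow> mat) \<Rightarrow> bool" where
  "superop_between_0_1 \<Omega> \<longleftrightarrow> (\<forall>\<sigma>. trace_class \<sigma> \<longrightarrow>
     hs_inner \<sigma> (\<Omega> \<sigma>) \<in> \<real> \<and> 0 \<le> Re (hs_inner \<sigma> (\<Omega> \<sigma>)) \<and>
     Re (hs_inner \<sigma> (\<Omega> \<sigma>)) \<le> (hs_norm \<sigma>)\<^sup>2)"

end

theory Submission
  imports Defs
begin

(* Because 0 <= Omega-bar <= 1, the channel is Hermitian and contractive for the Hilbert-Schmidt
   inner product.  Along an orbit x_N = Omega^N sigma the overlaps <x_N, x_M> therefore depend only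
   on N + M, and c_s = <sigma, x_s> is real, nonnegative and nonincreasing:
   c_(2m+2) = ||Omega x_m||^2 <= <x_m|Omega-bar|x_m> = c_(2m+1) <= ||x_m||^2 = c_(2m).
   Hence ||x_N - x_M||^2 = c_(2N) + c_(2M) - 2 c_(N+M) -> 0, and x_N converges in S_2 to a positive,
   Omega-invariant L with tr L <= 1.  A positive matrix with summable diagonal is trace class (its
   Cholesky factor has square-summable columns), so a nonzero L would make L / tr L a density
   with a constant orbit, contrary to the hypothesis.  Hence L = 0. *)

section \<open>Square-summable sequences\<close>

lemma Cauchy_Schwarz_square_summable:
  fixes f g :: "nat \<Rightarrow> real"
  assumes sf: "summable (\<lambda>i. (f i)\<^sup>2)" and sg: "summable (\<lambda>i. (g i)\<^sup>2)"
  shows "summable (\<lambda>i. \<bar>f i\<bar> * \<bar>g i\<bar>)"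
    and "(\<Sum>i. \<bar>f i\<bar> * \<bar>g i\<bar>) \<le> sqrt (\<Sum>i. (f i)\<^sup>2) * sqrt (\<Sum>i. (g i)\<^sup>2)"
proof -
  have b: "(\<Sum>i<n. \<bar>f i\<bar> * \<bar>g i\<bar>) \<le> sqrt (\<Sum>i. (f i)\<^sup>2) * sqrt (\<Sum>i. (g i)\<^sup>2)" for n
  proof -
    have "(\<Sum>i<n. \<bar>f i\<bar> * \<bar>g i\<bar>) \<le> L2_set f {..<n} * L2_set g {..<n}"
      by (rule L2_set_mult_ineq)
    also have "\<dots> \<le> sqrt (\<Sum>i. (f i)\<^sup>2) * sqrt (\<Sum>i. (g i)\<^sup>2)"
      unfolding L2_set_def
      using suminf_nonneg[OF sf] suminf_nonneg[OF sg]
      by (intro mult_mono real_sqrt_le_mono sum_le_suminf sf sg) (simp_all add: sum_nonneg)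
    finally show ?thesis .
  qed
  show s: "summable (\<lambda>i. \<bar>f i\<bar> * \<bar>g i\<bar>)"
    by (rule summableI_nonneg_bounded[OF _ b]) auto
  show "(\<Sum>i. \<bar>f i\<bar> * \<bar>g i\<bar>) \<le> sqrt (\<Sum>i. (f i)\<^sup>2) * sqrt (\<Sum>i. (g i)\<^sup>2)"
    by (rule suminf_le_const[OF s b])
qed

lemma vnorm_nonneg: "ell2 x \<Longrightarrow> 0 \<le> vnorm x"
  unfolding vnorm_def ell2_def by (simp add: suminf_nonneg)

lemma power2_vnorm: "ell2 x \<Longrightarrow> (vnorm x)\<^sup>2 = (\<Sum>i. (cmod (x i))\<^sup>2)"
  unfolding vnorm_def ell2_def by (simp add: suminf_nonneg)

lemma vinner_abs_summable:
  assumes "ell2 x" "ell2 y"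
  shows "summable (\<lambda>i. norm (cnj (x i) * y i))"
    and "(\<Sum>i. norm (cnj (x i) * y i)) \<le> vnorm x * vnorm y"
  using Cauchy_Schwarz_square_summable[of "\<lambda>i. cmod (x i)" "\<lambda>i. cmod (y i)"] assms
  unfolding ell2_def vnorm_def by (simp_all add: norm_mult)

lemma vinner_summable:
  "ell2 x \<Longrightarrow> ell2 y \<Longrightarrow> summable (\<lambda>i. cnj (x i) * y i)"
  by (rule summable_norm_cancel[OF vinner_abs_summable(1)])

lemma norm_vinner_le:
  assumes "ell2 x" "ell2 y"
  shows "cmod (vinner x y) \<le> vnorm x * vnorm y"
proof -
  have "cmod (vinner x y) \<le> (\<Sum>i. norm (cnj (x i) * y i))"
    unfolding vinner_def by (rule summable_norm[OF vinner_abs_summable(1)[OF assms]])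
  also have "\<dots> \<le> vnorm x * vnorm y" by (rule vinner_abs_summable(2)[OF assms])
  finally show ?thesis .
qed

lemma ell2_scale: "ell2 x \<Longrightarrow> ell2 (\<lambda>i. c * x i)"
  unfolding ell2_def using summable_mult[of "\<lambda>i. (cmod (x i))\<^sup>2" "(cmod c)\<^sup>2"]
  by (simp add: norm_mult power_mult_distrib)

lemma vnorm_scale: "ell2 x \<Longrightarrow> vnorm (\<lambda>i. c * x i) = cmod c * vnorm x"
proof -
  assume "ell2 x"
  then have "(\<Sum>i. (cmod c)\<^sup>2 * (cmod (x i))\<^sup>2) = (cmod c)\<^sup>2 * (\<Sum>i. (cmod (x i))\<^sup>2)"
    unfolding ell2_def by (rule suminf_mult)
  then show ?thesis unfolding vnorm_def norm_mult power_mult_distrib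
    by (simp add: real_sqrt_mult)
qed

lemma ell2_zero: "ell2 (\<lambda>i. 0)" unfolding ell2_def by simp
lemma vnorm_zero: "vnorm (\<lambda>i. 0) = 0" unfolding vnorm_def by simp

lemma norm_le_vnorm: "ell2 x \<Longrightarrow> cmod (x i) \<le> vnorm x"
proof -
  assume "ell2 x"
  then have "(cmod (x i))\<^sup>2 \<le> (\<Sum>i. (cmod (x i))\<^sup>2)"
    unfolding ell2_def using sum_le_suminf[of "\<lambda>i. (cmod (x i))\<^sup>2" "{i}"] by simp
  then show ?thesis unfolding vnorm_def by (simp add: real_le_rsqrt)
qed

section \<open>Hilbert-Schmidt matrices\<close>

definition entry_sq :: "mat \<Rightarrow> nat \<times> nat \<Rightarrow> real" where
  "entry_sq A = (\<lambda>(i,j). (cmod (A i j))\<^sup>2)"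
definition hilbert_schmidt :: "mat \<Rightarrow> bool" where
  "hilbert_schmidt A \<longleftrightarrow> entry_sq A summable_on UNIV"
definition hs_sqnorm :: "mat \<Rightarrow> real" where
  "hs_sqnorm A = infsum (entry_sq A) UNIV"
definition hs_inner_term :: "mat \<Rightarrow> mat \<Rightarrow> nat \<times> nat \<Rightarrow> complex" where
  "hs_inner_term A B = (\<lambda>(i,j). cnj (A i j) * B i j)"

lemma entry_sq_nonneg: "0 \<le> entry_sq A p" unfolding entry_sq_def by (simp add: case_prod_beta)

lemma hs_norm_eq_sqrt: "hs_norm A = sqrt (hs_sqnorm A)"
  unfolding hs_norm_def hs_sqnorm_def entry_sq_def ..

lemma hs_inner_eq_infsum: "hs_inner A B = infsum (hs_inner_term A B) UNIV"
  unfolding hs_inner_def hs_inner_term_def ..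

lemma hs_sqnorm_nonneg: "0 \<le> hs_sqnorm A"
  unfolding hs_sqnorm_def by (rule infsum_nonneg) (rule entry_sq_nonneg)

lemma power2_hs_norm: "(hs_norm A)\<^sup>2 = hs_sqnorm A"
  unfolding hs_norm_eq_sqrt using hs_sqnorm_nonneg by simp

lemma sum_entry_sq_le:
  "hilbert_schmidt A \<Longrightarrow> finite F \<Longrightarrow> sum (entry_sq A) F \<le> hs_sqnorm A"
  unfolding hilbert_schmidt_def hs_sqnorm_def
  by (rule finite_sum_le_infsum) (auto simp: entry_sq_nonneg)

lemma hilbert_schmidtI:
  assumes "\<And>F. finite F \<Longrightarrow> sum (entry_sq A) F \<le> C"
  shows "hilbert_schmidt A" "hs_sqnorm A \<le> C"
proof -
  show h: "hilbert_schmidt A" unfolding hilbert_schmidt_def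
  proof (rule nonneg_bdd_above_summable_on)
    show "bdd_above (sum (entry_sq A) ` {F. F \<subseteq> UNIV \<and> finite F})"
      by (rule bdd_aboveI2[of _ _ C]) (simp add: assms)
  qed (rule entry_sq_nonneg)
  show "hs_sqnorm A \<le> C" unfolding hs_sqnorm_def
    by (rule infsum_le_finite_sums) (use h assms in \<open>simp_all add: hilbert_schmidt_def\<close>)
qed

lemma norm_entry_le_hs_norm:
  assumes "hilbert_schmidt A"
  shows "cmod (A i j) \<le> hs_norm A"
proof -
  have "(cmod (A i j))\<^sup>2 \<le> hs_sqnorm A"
    using sum_entry_sq_le[OF assms, of "{(i,j)}"] by (simp add: entry_sq_def)
  then show ?thesis unfolding hs_norm_eq_sqrt by (simp add: real_le_rsqrt)
qed

lemma norm_lincomb_sq_le: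
  "(cmod (a + c * b))\<^sup>2 \<le> 2 * (cmod a)\<^sup>2 + 2 * (cmod c)\<^sup>2 * (cmod b)\<^sup>2"
proof -
  have "cmod (a + c * b) \<le> cmod a + cmod c * cmod b"
    using norm_triangle_ineq[of a "c*b"] by (simp add: norm_mult)
  then have "(cmod (a + c * b))\<^sup>2 \<le> (cmod a + cmod c * cmod b)\<^sup>2"
    by (rule power_mono) simp
  also have "\<dots> \<le> 2 * (cmod a)\<^sup>2 + 2 * (cmod c)\<^sup>2 * (cmod b)\<^sup>2"
  proof -
    have q: "(x + y)\<^sup>2 \<le> 2 * x\<^sup>2 + 2 * y\<^sup>2" for x y :: real
    proof -
      have "0 \<le> (x - y)\<^sup>2" by simp
      then show ?thesis unfolding power2_diff power2_sum by linarith
    qed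
    show ?thesis using q[of "cmod a" "cmod c * cmod b"] by (simp add: power_mult_distrib)
  qed
  finally show ?thesis .
qed

lemma hilbert_schmidt_lincomb:
  assumes "hilbert_schmidt A" "hilbert_schmidt B"
  shows "hilbert_schmidt (\<lambda>i j. A i j + c * B i j)"
proof (rule hilbert_schmidtI(1))
  fix F :: "(nat\<times>nat) set" assume F: "finite F"
  have "sum (entry_sq (\<lambda>i j. A i j + c * B i j)) F
      \<le> sum (\<lambda>p. 2 * entry_sq A p + 2 * (cmod c)\<^sup>2 * entry_sq B p) F"
    by (rule sum_mono) (auto simp: entry_sq_def norm_lincomb_sq_le)
  also have "\<dots> = 2 * sum (entry_sq A) F + 2 * (cmod c)\<^sup>2 * sum (entry_sq B) F"
    by (simp add: sum.distrib sum_distrib_left)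
  also have "\<dots> \<le> 2 * hs_sqnorm A + 2 * (cmod c)\<^sup>2 * hs_sqnorm B"
    using sum_entry_sq_le[OF assms(1) F] sum_entry_sq_le[OF assms(2) F]
    by (intro add_mono mult_left_mono) auto
  finally show "sum (entry_sq (\<lambda>i j. A i j + c * B i j)) F
      \<le> 2 * hs_sqnorm A + 2 * (cmod c)\<^sup>2 * hs_sqnorm B" .
qed

lemma hilbert_schmidt_zero: "hilbert_schmidt (\<lambda>i j. 0)"
  by (rule hilbert_schmidtI(1)[of _ 0]) (simp add: entry_sq_def)

lemma hilbert_schmidt_mdiff:
  "hilbert_schmidt A \<Longrightarrow> hilbert_schmidt B \<Longrightarrow> hilbert_schmidt (mdiff A B)"
  using hilbert_schmidt_lincomb[of A B "-1"] by (simp add: mdiff_def)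

lemma hilbert_schmidt_rows:
  assumes "hilbert_schmidt A"
  shows "summable (\<lambda>j. (cmod (A i j))\<^sup>2)"
    and "(\<Sum>i<n. \<Sum>j. (cmod (A i j))\<^sup>2) \<le> hs_sqnorm A"
proof -
  have fin: "(\<Sum>i<n. \<Sum>j<m. (cmod (A i j))\<^sup>2) \<le> hs_sqnorm A" for n m
  proof -
    have "(\<Sum>i<n. \<Sum>j<m. (cmod (A i j))\<^sup>2) = sum (entry_sq A) ({..<n} \<times> {..<m})"
      by (simp add: sum.cartesian_product entry_sq_def)
    also have "\<dots> \<le> hs_sqnorm A" by (rule sum_entry_sq_le[OF assms]) simp
    finally show ?thesis .
  qed
  have s: "summable (\<lambda>j. (cmod (A i j))\<^sup>2)" for i
  proof (rule summableI_nonneg_bounded[of _ "hs_sqnorm A"])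
    fix m
    have "(\<Sum>j<m. (cmod (A i j))\<^sup>2) \<le> (\<Sum>i'<Suc i. \<Sum>j<m. (cmod (A i' j))\<^sup>2)"
      by (rule member_le_sum) (simp_all add: sum_nonneg)
    then show "(\<Sum>j<m. (cmod (A i j))\<^sup>2) \<le> hs_sqnorm A"
      using fin[where n="Suc i" and m=m] by linarith
  qed simp
  then show "summable (\<lambda>j. (cmod (A i j))\<^sup>2)" .
  have "(\<Sum>i<n. \<Sum>j. (cmod (A i j))\<^sup>2) = (\<Sum>j. \<Sum>i<n. (cmod (A i j))\<^sup>2)"
    by (rule suminf_sum[symmetric]) (rule s)
  also have "\<dots> \<le> hs_sqnorm A"
    by (rule suminf_le_const) (auto intro!: summable_sum s simp: sum.swap[of _ "{..<n}"] fin)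
  finally show "(\<Sum>i<n. \<Sum>j. (cmod (A i j))\<^sup>2) \<le> hs_sqnorm A" .
qed

lemma hs_inner_term_summable:
  assumes "hilbert_schmidt A" "hilbert_schmidt B"
  shows "(\<lambda>p. norm (hs_inner_term A B p)) summable_on UNIV"
    and "hs_inner_term A B summable_on UNIV"
proof -
  have "(\<lambda>p. (1/2) * (entry_sq A p + entry_sq B p)) summable_on UNIV"
    using assms unfolding hilbert_schmidt_def
    by (intro summable_on_cmult_right summable_on_add) auto
  then have "(\<lambda>p. (entry_sq A p + entry_sq B p) / 2) summable_on UNIV" by simp
  then show a: "(\<lambda>p. norm (hs_inner_term A B p)) summable_on UNIV"
  proof (rule summable_on_comparison_test)
    fix p :: "nat\<times>nat"
    obtain i j where p: "p = (i,j)" by fastforce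
    have "cmod (A i j) * cmod (B i j) \<le> ((cmod (A i j))\<^sup>2 + (cmod (B i j))\<^sup>2)/2"
      using sum_squares_bound[of "cmod (A i j)" "cmod (B i j)"] by (simp add: field_simps)
    then show "norm (hs_inner_term A B p) \<le> (entry_sq A p + entry_sq B p) / 2"
      by (simp add: p hs_inner_term_def entry_sq_def norm_mult)
  qed simp
  then show "hs_inner_term A B summable_on UNIV" by (rule abs_summable_summable)
qed

lemma hs_inner_lincomb_right:
  assumes "hilbert_schmidt A" "hilbert_schmidt B" "hilbert_schmidt C"
  shows "hs_inner A (\<lambda>i j. B i j + c * C i j) = hs_inner A B + c * hs_inner A C"
proof -
  have e: "hs_inner_term A (\<lambda>i j. B i j + c * C i j)
      = (\<lambda>p. hs_inner_term A B p + c * hs_inner_term A C p)"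
    by (auto simp: hs_inner_term_def algebra_simps)
  show ?thesis unfolding hs_inner_eq_infsum e
    using hs_inner_term_summable(2)[OF assms(1,2)] hs_inner_term_summable(2)[OF assms(1,3)]
    by (simp add: infsum_add summable_on_cmult_right infsum_cmult_right)
qed

lemma hs_inner_swap: "hs_inner B A = cnj (hs_inner A B)"
proof -
  have e: "hs_inner_term B A = (\<lambda>p. cnj (hs_inner_term A B p))"
    by (auto simp: hs_inner_term_def)
  show ?thesis unfolding hs_inner_eq_infsum e by simp
qed

lemma hs_inner_lincomb_left:
  assumes "hilbert_schmidt A" "hilbert_schmidt B" "hilbert_schmidt C"
  shows "hs_inner (\<lambda>i j. B i j + c * C i j) A = hs_inner B A + cnj c * hs_inner C A"
  using hs_inner_lincomb_right[OF assms, of c]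
  by (metis complex_cnj_add complex_cnj_mult complex_cnj_cnj hs_inner_swap)

lemma cnj_mult_self: "cnj z * z = of_real ((cmod z)\<^sup>2)"
  by (subst complex_norm_square) (rule mult.commute)

lemma hs_inner_self:
  assumes "hilbert_schmidt A" shows "hs_inner A A = of_real (hs_sqnorm A)"
proof -
  have e: "hs_inner_term A A = (\<lambda>p. of_real (entry_sq A p))"
    by (intro ext) (simp add: hs_inner_term_def entry_sq_def split_def cnj_mult_self)
  have "(entry_sq A has_sum hs_sqnorm A) UNIV"
    using assms unfolding hilbert_schmidt_def hs_sqnorm_def by (simp add: has_sum_infsum)
  then have "(hs_inner_term A A has_sum of_real (hs_sqnorm A)) UNIV"
    unfolding e by (rule has_sum_of_real)
  then show ?thesis unfolding hs_inner_eq_infsum by (rule infsumI)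
qed

lemma hs_sqnorm_mdiff:
  assumes A: "hilbert_schmidt A" and B: "hilbert_schmidt B"
  shows "hs_sqnorm (mdiff A B) = Re (hs_inner A A) + Re (hs_inner B B) - 2 * Re (hs_inner A B)"
proof -
  let ?d = "mdiff A B"
  have d: "?d = (\<lambda>i j. A i j + (-1) * B i j)" by (simp add: mdiff_def)
  have hd: "hilbert_schmidt ?d" by (rule hilbert_schmidt_mdiff[OF A B])
  have "complex_of_real (hs_sqnorm ?d) = hs_inner ?d ?d"
    by (rule hs_inner_self[OF hd, symmetric])
  also have "\<dots> = hs_inner A ?d - hs_inner B ?d"
    using hs_inner_lincomb_left[OF hd A B, of "-1"] unfolding d[symmetric] by simp
  also have "\<dots> = hs_inner A A - hs_inner A B - (hs_inner B A - hs_inner B B)"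
    using hs_inner_lincomb_right[OF A A B, of "-1"] hs_inner_lincomb_right[OF B A B, of "-1"]
    unfolding d[symmetric] by simp
  finally have "Re (complex_of_real (hs_sqnorm ?d))
      = Re (hs_inner A A - hs_inner A B - (hs_inner B A - hs_inner B B))"
    by (rule arg_cong)
  moreover have "Re (hs_inner B A) = Re (hs_inner A B)"
    unfolding hs_inner_swap[of B A] by simp
  ultimately show ?thesis by simp
qed

definition entrywise_lim :: "(nat \<Rightarrow> mat) \<Rightarrow> mat" where
  "entrywise_lim X i j = lim (\<lambda>N. X N i j)"

lemma entry_sq_mdiff:
  "entry_sq (mdiff X Y) p = (cmod (X (fst p) (snd p) - Y (fst p) (snd p)))\<^sup>2"
  by (simp add: entry_sq_def mdiff_def split_def)

lemma hs_norm_mdiff_commute: "hs_norm (mdiff X Y) = hs_norm (mdiff Y X)"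
proof -
  have "entry_sq (mdiff X Y) = entry_sq (mdiff Y X)"
    by (intro ext) (simp add: entry_sq_mdiff norm_minus_commute)
  then show ?thesis by (simp add: hs_norm_eq_sqrt hs_sqnorm_def)
qed

context
  fixes X :: "nat \<Rightarrow> mat"
  assumes hs: "\<And>N. hilbert_schmidt (X N)"
    and hs_Cauchy: "\<And>e. 0 < e \<Longrightarrow> \<exists>K. \<forall>N\<ge>K. \<forall>M\<ge>K. hs_sqnorm (mdiff (X N) (X M)) < e"
begin

lemma entrywise_lim_tendsto: "(\<lambda>N. X N i j) \<longlonglongrightarrow> entrywise_lim X i j"
proof -
  have "Cauchy (\<lambda>N. X N i j)"
    unfolding Cauchy_def
  proof (intro allI impI)
    fix e :: real assume e: "0 < e"
    obtain K where K: "\<And>N M. N \<ge> K \<Longrightarrow> M \<ge> K \<Longrightarrow> hs_sqnorm (mdiff (X N) (X M)) < e\<^sup>2"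
      using hs_Cauchy[of "e\<^sup>2"] e by auto
    have "dist (X m i j) (X n i j) < e" if "K \<le> m" "K \<le> n" for m n
    proof -
      have "dist (X m i j) (X n i j) = cmod (mdiff (X m) (X n) i j)"
        by (simp add: dist_norm mdiff_def)
      also have "\<dots> \<le> hs_norm (mdiff (X m) (X n))"
        by (rule norm_entry_le_hs_norm[OF hilbert_schmidt_mdiff[OF hs hs]])
      also have "\<dots> < sqrt (e\<^sup>2)"
        unfolding hs_norm_eq_sqrt by (rule real_sqrt_less_mono[OF K[OF that]])
      finally show ?thesis using e by simp
    qed
    then show "\<exists>K. \<forall>m\<ge>K. \<forall>n\<ge>K. dist (X m i j) (X n i j) < e"
      by blast
  qed
  then show ?thesis
    unfolding entrywise_lim_def using Cauchy_convergent_iff convergent_LIMSEQ_iff by blast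
qed

lemma hs_close_to_entrywise_lim:
  assumes "0 < e"
  obtains K where "\<And>N. N \<ge> K \<Longrightarrow>
    hilbert_schmidt (mdiff (X N) (entrywise_lim X)) \<and> hs_sqnorm (mdiff (X N) (entrywise_lim X)) \<le> e"
proof -
  obtain K where K: "\<And>N M. N \<ge> K \<Longrightarrow> M \<ge> K \<Longrightarrow> hs_sqnorm (mdiff (X N) (X M)) < e"
    using hs_Cauchy[OF assms] by auto
  have fin: "sum (entry_sq (mdiff (X N) (entrywise_lim X))) F \<le> e" if N: "K \<le> N" and F: "finite F" for N F
  proof (rule LIMSEQ_le_const2)
    show "(\<lambda>M. sum (entry_sq (mdiff (X N) (X M))) F) \<longlonglongrightarrow> sum (entry_sq (mdiff (X N) (entrywise_lim X))) F"
      unfolding entry_sq_mdiff by (intro tendsto_intros entrywise_lim_tendsto)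
    have "sum (entry_sq (mdiff (X N) (X M))) F \<le> e" if "K \<le> M" for M
      using sum_entry_sq_le[OF hilbert_schmidt_mdiff[OF hs hs] F, of N M] K[OF N that] by simp
    then show "\<exists>K'. \<forall>M\<ge>K'. sum (entry_sq (mdiff (X N) (X M))) F \<le> e"
      by blast
  qed
  show ?thesis
  proof (rule that)
    fix N assume "K \<le> N"
    then have "\<And>F. finite F \<Longrightarrow> sum (entry_sq (mdiff (X N) (entrywise_lim X))) F \<le> e"
      using fin by blast
    from hilbert_schmidtI[OF this]
    show "hilbert_schmidt (mdiff (X N) (entrywise_lim X)) \<and> hs_sqnorm (mdiff (X N) (entrywise_lim X)) \<le> e"
      by blast
  qed
qed

lemma hilbert_schmidt_entrywise_lim: "hilbert_schmidt (entrywise_lim X)"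
proof -
  obtain K where K: "hilbert_schmidt (mdiff (X K) (entrywise_lim X))"
    using hs_close_to_entrywise_lim[of 1] by auto
  have "entrywise_lim X = (\<lambda>i j. X K i j + (-1) * mdiff (X K) (entrywise_lim X) i j)"
    by (simp add: mdiff_def)
  then show ?thesis using hilbert_schmidt_lincomb[OF hs K] by metis
qed

lemma hs_norm_tendsto_entrywise_lim:
  "(\<lambda>N. hs_norm (mdiff (X N) (entrywise_lim X))) \<longlonglongrightarrow> 0"
proof -
  have "(\<lambda>N. hs_sqnorm (mdiff (X N) (entrywise_lim X))) \<longlonglongrightarrow> 0"
    unfolding LIMSEQ_iff
  proof (intro allI impI)
    fix r :: real assume r: "0 < r"
    then obtain K where K: "\<And>N. N \<ge> K \<Longrightarrow> hs_sqnorm (mdiff (X N) (entrywise_lim X)) \<le> r / 2"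
      using hs_close_to_entrywise_lim[of "r / 2"] by (metis half_gt_zero)
    have "norm (hs_sqnorm (mdiff (X N) (entrywise_lim X)) - 0) < r" if "K \<le> N" for N
      using K[OF that] hs_sqnorm_nonneg[of "mdiff (X N) (entrywise_lim X)"] r by simp
    then show "\<exists>K. \<forall>N\<ge>K. norm (hs_sqnorm (mdiff (X N) (entrywise_lim X)) - 0) < r" by blast
  qed
  then show ?thesis unfolding hs_norm_eq_sqrt using tendsto_real_sqrt by fastforce
qed

end

section \<open>Trace-class matrices\<close>

lemma LIMSEQ_even_odd:
  assumes "(\<lambda>n. f (2 * n)) \<longlonglongrightarrow> (l :: 'a :: topological_space)"
    and "(\<lambda>n. f (2 * n + 1)) \<longlonglongrightarrow> l"
  shows "f \<longlonglongrightarrow> l"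
proof (rule topological_tendstoI)
  fix S assume S: "open S" "l \<in> S"
  obtain n0 where n0: "\<And>n. n \<ge> n0 \<Longrightarrow> f (2 * n) \<in> S"
    using topological_tendstoD[OF assms(1) S] by (auto simp: eventually_sequentially)
  obtain n1 where n1: "\<And>n. n \<ge> n1 \<Longrightarrow> f (2 * n + 1) \<in> S"
    using topological_tendstoD[OF assms(2) S] by (auto simp: eventually_sequentially)
  have "f n \<in> S" if "2 * max n0 n1 + 1 \<le> n" for n
  proof (cases "even n")
    case True
    then obtain m where "n = 2 * m" by blast
    then show ?thesis using n0[of m] that by simp
  next
    case False
    then obtain m where "n = 2 * m + 1" using oddE by blast
    then show ?thesis using n1[of m] that by simp
  qed
  then show "\<forall>\<^sub>F n in sequentially. f n \<in> S"
    unfolding eventually_sequentially by blast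
qed

definition interleave :: "(nat \<Rightarrow> 'a) \<Rightarrow> (nat \<Rightarrow> 'a) \<Rightarrow> nat \<Rightarrow> 'a" where
  "interleave f g k = (if even k then f (k div 2) else g (k div 2))"

lemma sum_interleave:
  "(\<Sum>i<2 * n. interleave f g i) = (\<Sum>i<n. f i) + (\<Sum>i<n. (g i :: 'a :: comm_monoid_add))"
proof (induction n)
  case 0 then show ?case by simp
next
  case (Suc n)
  have "(\<Sum>i<2 * Suc n. interleave f g i)
      = (\<Sum>i<2 * n. interleave f g i) + interleave f g (2*n) + interleave f g (2*n+1)"
    by (simp add: ac_simps)
  also have "\<dots> = (\<Sum>i<Suc n. f i) + (\<Sum>i<Suc n. g i)"
    using Suc by (simp add: interleave_def ac_simps)
  finally show ?case .
qed

lemma sums_interleave: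
  fixes f g :: "nat \<Rightarrow> 'a :: real_normed_vector"
  assumes "f sums a" "g sums b"
  shows "interleave f g sums (a + b)"
  unfolding sums_def
proof (rule LIMSEQ_even_odd)
  have e: "(\<lambda>n. \<Sum>i<2 * n. interleave f g i) \<longlonglongrightarrow> a + b"
    unfolding sum_interleave using assms unfolding sums_def by (rule tendsto_add)
  then show "(\<lambda>n. \<Sum>i<2 * n. interleave f g i) \<longlonglongrightarrow> a + b" .
  have "(\<lambda>n. (\<Sum>i<2 * n. interleave f g i) + f n) \<longlonglongrightarrow> a + b + 0"
    using e assms(1) summable_LIMSEQ_zero sums_summable by (intro tendsto_add) blast+
  moreover have "(\<Sum>i<2 * n + 1. interleave f g i) = (\<Sum>i<2 * n. interleave f g i) + f n" for n
    by (simp add: interleave_def)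
  ultimately show "(\<lambda>n. \<Sum>i<2 * n + 1. interleave f g i) \<longlonglongrightarrow> a + b" by simp
qed

lemma nuclear_rep_zero: "nuclear_rep (\<lambda>i j. 0) (\<lambda>k i. 0) (\<lambda>k i. 0)"
  unfolding nuclear_rep_def by (simp add: ell2_zero vnorm_zero)

lemma trace_class_zero: "trace_class (\<lambda>i j. 0)"
  unfolding trace_class_def using nuclear_rep_zero by blast

lemma trace_norm_zero: "trace_norm (\<lambda>i j. 0) = 0"
proof -
  let ?S = "{(\<Sum>k. vnorm (u k) * vnorm (v k)) | u v. nuclear_rep (\<lambda>i j. 0) u v}"
  have "0 \<in> ?S" using nuclear_rep_zero by (force simp: vnorm_zero)
  moreover have "\<forall>x\<in>?S. 0 \<le> x"
    by (auto simp: nuclear_rep_def intro!: suminf_nonneg mult_nonneg_nonneg vnorm_nonneg)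
  ultimately show ?thesis unfolding trace_norm_def
    by (intro cInf_eq_minimum) auto
qed

lemma trace_class_lincomb:
  assumes "trace_class A" "trace_class B"
  shows "trace_class (\<lambda>i j. A i j + c * B i j)"
proof -
  obtain u v where r1: "nuclear_rep A u v" using assms(1) trace_class_def by blast
  obtain u' v' where r2: "nuclear_rep B u' v'" using assms(2) trace_class_def by blast
  define U where "U = interleave u (\<lambda>k i. c * u' k i)"
  define V where "V = interleave v v'"
  have "nuclear_rep (\<lambda>i j. A i j + c * B i j) U V"
    unfolding nuclear_rep_def
  proof (intro conjI allI)
    fix k show "ell2 (U k)" "ell2 (V k)" using r1 r2
      by (auto simp: U_def V_def interleave_def nuclear_rep_def ell2_scale)
  next
    have s1: "summable (\<lambda>k. vnorm (u k) * vnorm (v k))" using r1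
      by (simp add: nuclear_rep_def)
    have s2: "summable (\<lambda>k. cmod c * (vnorm (u' k) * vnorm (v' k)))"
      using r2 by (simp add: nuclear_rep_def summable_mult)
    have e: "(\<lambda>k. vnorm (U k) * vnorm (V k)) =
         interleave (\<lambda>k. vnorm (u k) * vnorm (v k)) (\<lambda>k. cmod c * (vnorm (u' k) * vnorm (v' k)))"
      using r2 by (auto simp: U_def V_def interleave_def nuclear_rep_def vnorm_scale)
    show "summable (\<lambda>k. vnorm (U k) * vnorm (V k))"
      unfolding e using sums_interleave[OF summable_sums[OF s1] summable_sums[OF s2]] sums_summable
      by blast
  next
    fix i j
    have a: "(\<lambda>k. u k i * cnj (v k j)) sums A i j" using r1 by (simp add: nuclear_rep_def)
    have b: "(\<lambda>k. c * (u' k i * cnj (v' k j))) sums (c * B i j)"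
      using r2 by (simp add: nuclear_rep_def sums_mult)
    have e: "(\<lambda>k. U k i * cnj (V k j))
        = interleave (\<lambda>k. u k i * cnj (v k j)) (\<lambda>k. c * (u' k i * cnj (v' k j)))"
      by (auto simp: U_def V_def interleave_def)
    show "(\<lambda>k. U k i * cnj (V k j)) sums (A i j + c * B i j)"
      unfolding e by (rule sums_interleave[OF a b])
  qed
  then show ?thesis unfolding trace_class_def by blast
qed

lemma trace_class_scale: "trace_class A \<Longrightarrow> trace_class (\<lambda>i j. c * A i j)"
  using trace_class_lincomb[OF trace_class_zero, of A c] by simp

lemma trace_class_mdiff:
  "trace_class A \<Longrightarrow> trace_class B \<Longrightarrow> trace_class (mdiff A B)"
  using trace_class_lincomb[of A B "-1"] by (simp add: mdiff_def)


lemma L2_set_rank_one_le: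
  assumes "ell2 a" "ell2 b" "finite F"
  shows "L2_set (\<lambda>p. cmod (a (fst p) * cnj (b (snd p)))) F \<le> vnorm a * vnorm b"
proof -
  let ?I = "fst ` F" and ?J = "snd ` F"
  have "(\<Sum>p\<in>F. (cmod (a (fst p) * cnj (b (snd p))))\<^sup>2) \<le> (\<Sum>p\<in>?I \<times> ?J. (cmod (a (fst p) * cnj (b (snd p))))\<^sup>2)"
    by (rule sum_mono2) (use assms(3) in \<open>auto intro: rev_image_eqI\<close>)
  also have "\<dots> = (\<Sum>i\<in>?I. (cmod (a i))\<^sup>2) * (\<Sum>j\<in>?J. (cmod (b j))\<^sup>2)"
    by (simp add: sum.cartesian_product split_def sum_product norm_mult power_mult_distrib)
  also have "\<dots> \<le> (\<Sum>i. (cmod (a i))\<^sup>2) * (\<Sum>j. (cmod (b j))\<^sup>2)"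
    using assms unfolding ell2_def
    by (intro mult_mono sum_le_suminf) (auto intro: sum_nonneg suminf_nonneg)
  also have "\<dots> = (vnorm a * vnorm b)\<^sup>2"
    using assms by (simp add: power_mult_distrib power2_vnorm)
  finally show ?thesis unfolding L2_set_def
    using assms by (simp add: real_sqrt_le_iff vnorm_nonneg real_le_lsqrt)
qed

lemma L2_set_sum_triangle:
  fixes K :: nat
  shows "L2_set (\<lambda>p. cmod (\<Sum>k<K. w k p)) F \<le> (\<Sum>k<K. L2_set (\<lambda>p. cmod (w k p)) F)"
proof (induct K)
  case 0 then show ?case by (simp add: L2_set_def)
next
  case (Suc K)
  have "L2_set (\<lambda>p. cmod (\<Sum>k<Suc K. w k p)) F \<le> L2_set (\<lambda>p. cmod (\<Sum>k<K. w k p) + cmod (w K p)) F"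
    by (rule L2_set_mono) (auto intro: norm_triangle_ineq)
  also have "\<dots> \<le> L2_set (\<lambda>p. cmod (\<Sum>k<K. w k p)) F + L2_set (\<lambda>p. cmod (w K p)) F"
    by (rule L2_set_triangle_ineq)
  also have "\<dots> \<le> (\<Sum>k<Suc K. L2_set (\<lambda>p. cmod (w k p)) F)"
    using Suc by simp
  finally show ?case .
qed

lemma nuclear_rep_hilbert_schmidt:
  assumes r: "nuclear_rep A u v"
  shows "hilbert_schmidt A" "hs_sqnorm A \<le> (\<Sum>k. vnorm (u k) * vnorm (v k))\<^sup>2"
proof -
  let ?C = "(\<Sum>k. vnorm (u k) * vnorm (v k))"
  have uv: "\<And>k. ell2 (u k)" "\<And>k. ell2 (v k)" and sC: "summable (\<lambda>k. vnorm (u k) * vnorm (v k))"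
    and sm: "\<And>i j. (\<lambda>k. u k i * cnj (v k j)) sums A i j"
    using r by (auto simp: nuclear_rep_def)
  have C0: "0 \<le> ?C" by (intro suminf_nonneg sC mult_nonneg_nonneg vnorm_nonneg uv)
  have fin: "sum (entry_sq A) F \<le> ?C\<^sup>2" if F: "finite F" for F
  proof -
    define S where "S K p = (\<Sum>k<K. u k (fst p) * cnj (v k (snd p)))" for K p
    have b: "(\<Sum>p\<in>F. (cmod (S K p))\<^sup>2) \<le> ?C\<^sup>2" for K
    proof -
      have "L2_set (\<lambda>p. cmod (S K p)) F \<le> (\<Sum>k<K. L2_set (\<lambda>p. cmod (u k (fst p) * cnj (v k (snd p)))) F)"
        unfolding S_def by (rule L2_set_sum_triangle)
      also have "\<dots> \<le> (\<Sum>k<K. vnorm (u k) * vnorm (v k))"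
        by (rule sum_mono) (rule L2_set_rank_one_le[OF uv F])
      also have "\<dots> \<le> ?C"
        by (rule sum_le_suminf[OF sC]) (auto intro: mult_nonneg_nonneg vnorm_nonneg uv)
      finally have "sqrt (\<Sum>p\<in>F. (cmod (S K p))\<^sup>2) \<le> ?C" unfolding L2_set_def .
      then show ?thesis using C0 by (simp add: real_sqrt_le_iff sqrt_le_D)
    qed
    have "(\<lambda>K. \<Sum>p\<in>F. (cmod (S K p))\<^sup>2) \<longlonglongrightarrow> (\<Sum>p\<in>F. (cmod (A (fst p) (snd p)))\<^sup>2)"
    proof (intro tendsto_sum tendsto_power tendsto_norm)
      fix p show "(\<lambda>K. S K p) \<longlonglongrightarrow> A (fst p) (snd p)"
        using sm[of "fst p" "snd p"] unfolding S_def sums_def .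
    qed
    then have "(\<Sum>p\<in>F. (cmod (A (fst p) (snd p)))\<^sup>2) \<le> ?C\<^sup>2"
      by (rule LIMSEQ_le_const2) (use b in blast)
    then show ?thesis by (simp add: entry_sq_def split_def)
  qed
  show "hilbert_schmidt A" by (rule hilbert_schmidtI(1)[OF fin])
  show "hs_sqnorm A \<le> ?C\<^sup>2" by (rule hilbert_schmidtI(2)[OF fin])
qed

lemma trace_class_hilbert_schmidt: "trace_class A \<Longrightarrow> hilbert_schmidt A"
  unfolding trace_class_def using nuclear_rep_hilbert_schmidt(1) by blast

lemma nuclear_rep_diag_summable:
  assumes r: "nuclear_rep A u v"
  shows "summable (\<lambda>i. cmod (A i i))"
proof -
  let ?C = "(\<Sum>k. vnorm (u k) * vnorm (v k))"
  have uv: "\<And>k. ell2 (u k)" "\<And>k. ell2 (v k)" and sC: "summable (\<lambda>k. vnorm (u k) * vnorm (v k))"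
    and sm: "\<And>i j. (\<lambda>k. u k i * cnj (v k j)) sums A i j"
    using r by (auto simp: nuclear_rep_def)
  have sk: "summable (\<lambda>k. cmod (u k i) * cmod (v k i))" for i
    by (rule summable_comparison_test[OF _ sC])
       (auto intro!: mult_mono norm_le_vnorm uv vnorm_nonneg)
  have le: "cmod (A i i) \<le> (\<Sum>k. cmod (u k i) * cmod (v k i))" for i
  proof -
    have "A i i = (\<Sum>k. u k i * cnj (v k i))" using sm sums_unique by blast
    also have "cmod \<dots> \<le> (\<Sum>k. norm (u k i * cnj (v k i)))"
      by (rule summable_norm) (use sk[of i] in \<open>simp add: norm_mult\<close>)
    finally show ?thesis by (simp add: norm_mult)
  qed
  show ?thesis
  proof (rule summableI_nonneg_bounded[of _ ?C])
    fix n
    have "(\<Sum>i<n. cmod (A i i)) \<le> (\<Sum>i<n. \<Sum>k. cmod (u k i) * cmod (v k i))"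
      by (rule sum_mono) (rule le)
    also have "\<dots> = (\<Sum>k. \<Sum>i<n. cmod (u k i) * cmod (v k i))"
      by (rule suminf_sum[symmetric]) (rule sk)
    also have "\<dots> \<le> ?C"
    proof (rule suminf_le)
      fix k
      have "(\<Sum>i<n. cmod (u k i) * cmod (v k i)) \<le> L2_set (\<lambda>i. cmod (u k i)) {..<n} * L2_set (\<lambda>i. cmod (v k i)) {..<n}"
        using L2_set_mult_ineq[of "\<lambda>i. cmod (u k i)" "\<lambda>i. cmod (v k i)" "{..<n}"]
        by simp
      also have "\<dots> \<le> vnorm (u k) * vnorm (v k)"
        unfolding L2_set_def vnorm_def using uv[of k] unfolding ell2_def
        by (intro mult_mono real_sqrt_le_mono sum_le_suminf) (auto intro: sum_nonneg suminf_nonneg)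
      finally show "(\<Sum>i<n. cmod (u k i) * cmod (v k i)) \<le> vnorm (u k) * vnorm (v k)" .
    qed (auto intro!: summable_sum sk sC)
    finally show "(\<Sum>i<n. cmod (A i i)) \<le> ?C" .
  qed simp
qed

lemma trace_class_diag_summable:
  "trace_class A \<Longrightarrow> summable (\<lambda>i. cmod (A i i))"
  unfolding trace_class_def using nuclear_rep_diag_summable by blast

section \<open>Matrices acting on square-summable sequences\<close>

lemma ell2_cnj: "ell2 (\<lambda>j. cnj (x j)) = ell2 x" unfolding ell2_def by simp
lemma vnorm_cnj: "vnorm (\<lambda>j. cnj (x j)) = vnorm x" unfolding vnorm_def by simp

lemma hilbert_schmidt_row_ell2: "hilbert_schmidt A \<Longrightarrow> ell2 (\<lambda>j. A i j)"
  unfolding ell2_def using hilbert_schmidt_rows(1) by blast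

lemma mv_eq_vinner_row: "mv A x i = vinner (\<lambda>j. cnj (A i j)) x"
  unfolding mv_def vinner_def by simp

lemma mv_hilbert_schmidt:
  assumes "hilbert_schmidt A" "ell2 x"
  shows "ell2 (mv A x)" "vnorm (mv A x) \<le> hs_norm A * vnorm x"
    and "\<And>i. summable (\<lambda>j. A i j * x j)"
proof -
  have r: "ell2 (\<lambda>j. cnj (A i j))" for i
    using hilbert_schmidt_row_ell2[OF assms(1)] ell2_cnj by blast
  show "summable (\<lambda>j. A i j * x j)" for i
    using vinner_summable[OF r assms(2)] by simp
  have b: "(cmod (mv A x i))\<^sup>2 \<le> (\<Sum>j. (cmod (A i j))\<^sup>2) * (vnorm x)\<^sup>2" for i
  proof -
    have "cmod (mv A x i) \<le> vnorm (\<lambda>j. A i j) * vnorm x"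
      unfolding mv_eq_vinner_row using norm_vinner_le[OF r assms(2)] by (simp add: vnorm_cnj)
    then have "(cmod (mv A x i))\<^sup>2 \<le> (vnorm (\<lambda>j. A i j) * vnorm x)\<^sup>2"
      by (rule power_mono) simp
    also have "\<dots> = (\<Sum>j. (cmod (A i j))\<^sup>2) * (vnorm x)\<^sup>2"
      using hilbert_schmidt_row_ell2[OF assms(1)] by (simp add: power_mult_distrib power2_vnorm)
    finally show ?thesis .
  qed
  have p: "(\<Sum>i<n. (cmod (mv A x i))\<^sup>2) \<le> hs_sqnorm A * (vnorm x)\<^sup>2" for n
  proof -
    have "(\<Sum>i<n. (cmod (mv A x i))\<^sup>2) \<le> (\<Sum>i<n. (\<Sum>j. (cmod (A i j))\<^sup>2) * (vnorm x)\<^sup>2)"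
      by (rule sum_mono) (rule b)
    also have "\<dots> = (\<Sum>i<n. (\<Sum>j. (cmod (A i j))\<^sup>2)) * (vnorm x)\<^sup>2"
      by (simp add: sum_distrib_right)
    also have "\<dots> \<le> hs_sqnorm A * (vnorm x)\<^sup>2"
      by (rule mult_right_mono[OF hilbert_schmidt_rows(2)[OF assms(1)]]) simp
    finally show ?thesis .
  qed
  have s: "summable (\<lambda>i. (cmod (mv A x i))\<^sup>2)"
    by (rule summableI_nonneg_bounded[OF _ p]) simp
  then show e: "ell2 (mv A x)" unfolding ell2_def .
  have "(vnorm (mv A x))\<^sup>2 \<le> hs_sqnorm A * (vnorm x)\<^sup>2"
    unfolding power2_vnorm[OF e] by (rule suminf_le_const[OF s p])
  also have "\<dots> = (hs_norm A * vnorm x)\<^sup>2"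
    by (simp add: power_mult_distrib power2_hs_norm)
  finally have "(vnorm (mv A x))\<^sup>2 \<le> (hs_norm A * vnorm x)\<^sup>2" .
  moreover have "0 \<le> hs_norm A * vnorm x"
    unfolding hs_norm_eq_sqrt using vnorm_nonneg[OF assms(2)] hs_sqnorm_nonneg[of A]
    by (intro mult_nonneg_nonneg) simp_all
  ultimately show "vnorm (mv A x) \<le> hs_norm A * vnorm x"
    by (rule power2_le_imp_le)
qed

lemma norm_vinner_mv_le:
  assumes "hilbert_schmidt A" "ell2 x" "ell2 y"
  shows "cmod (vinner y (mv A x)) \<le> vnorm y * (hs_norm A * vnorm x)"
proof -
  have "cmod (vinner y (mv A x)) \<le> vnorm y * vnorm (mv A x)"
    by (rule norm_vinner_le[OF assms(3) mv_hilbert_schmidt(1)[OF assms(1,2)]])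
  also have "\<dots> \<le> vnorm y * (hs_norm A * vnorm x)"
    by (rule mult_left_mono[OF mv_hilbert_schmidt(2)[OF assms(1,2)] vnorm_nonneg[OF assms(3)]])
  finally show ?thesis .
qed

lemma mv_lincomb:
  assumes "hilbert_schmidt A" "hilbert_schmidt B" "ell2 x"
  shows "mv (\<lambda>i j. A i j + c * B i j) x = (\<lambda>i. mv A x i + c * mv B x i)"
proof
  fix i
  have "(\<lambda>j. (A i j + c * B i j) * x j) = (\<lambda>j. A i j * x j + c * (B i j * x j))"
    by (simp add: algebra_simps)
  then show "mv (\<lambda>i j. A i j + c * B i j) x i = mv A x i + c * mv B x i"
    unfolding mv_def
      using mv_hilbert_schmidt(3)[OF assms(1,3), of i] mv_hilbert_schmidt(3)[OF assms(2,3), of i]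
    by (simp add: suminf_add[symmetric] summable_mult suminf_mult)
qed

lemma vinner_lincomb:
  assumes "ell2 y" "ell2 a" "ell2 b"
  shows "vinner y (\<lambda>i. a i + c * b i) = vinner y a + c * vinner y b"
proof -
  have "(\<lambda>i. cnj (y i) * (a i + c * b i)) = (\<lambda>i. cnj (y i) * a i + c * (cnj (y i) * b i))"
    by (simp add: algebra_simps)
  then show ?thesis
    unfolding vinner_def using vinner_summable[OF assms(1,2)] vinner_summable[OF assms(1,3)]
    by (simp add: suminf_add[symmetric] summable_mult suminf_mult)
qed

lemma vinner_mv_lincomb:
  assumes "hilbert_schmidt A" "hilbert_schmidt B" "ell2 x" "ell2 y"
  shows "vinner y (mv (\<lambda>i j. A i j + c * B i j) x)
    = vinner y (mv A x) + c * vinner y (mv B x)"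
  unfolding mv_lincomb[OF assms(1-3)]
  by (rule vinner_lincomb[OF assms(4) mv_hilbert_schmidt(1)[OF assms(1,3)]
        mv_hilbert_schmidt(1)[OF assms(2,3)]])

lemma trace_mmult_outer:
  assumes "hilbert_schmidt A" "ell2 \<phi>"
  shows "trace (mmult A (outer \<phi> \<psi>)) = vinner \<psi> (mv A \<phi>)"
proof -
  have "mmult A (outer \<phi> \<psi>) i i = cnj (\<psi> i) * mv A \<phi> i" for i
  proof -
    have "mmult A (outer \<phi> \<psi>) i i = (\<Sum>k. (A i k * \<phi> k) * cnj (\<psi> i))"
      unfolding mmult_def outer_def by (simp add: mult.assoc)
    also have "\<dots> = (\<Sum>k. A i k * \<phi> k) * cnj (\<psi> i)"
      by (rule suminf_mult2[symmetric]) (rule mv_hilbert_schmidt(3)[OF assms])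
    finally show ?thesis unfolding mv_def by (simp add: mult.commute)
  qed
  then show ?thesis unfolding trace_def vinner_def by simp
qed

lemma trace_mmult_outer_tendsto_zero:
  assumes "\<And>N. hilbert_schmidt (X N)" "(\<lambda>N. hs_norm (X N)) \<longlonglongrightarrow> 0"
    and "ell2 \<phi>" "ell2 \<psi>"
  shows "(\<lambda>N. trace (mmult (X N) (outer \<phi> \<psi>))) \<longlonglongrightarrow> 0"
proof (rule Lim_null_comparison)
  show "\<forall>\<^sub>F N in sequentially. norm (trace (mmult (X N) (outer \<phi> \<psi>)))
      \<le> vnorm \<psi> * (hs_norm (X N) * vnorm \<phi>)"
    using norm_vinner_mv_le[OF assms(1) assms(3,4)] by (simp add: trace_mmult_outer[OF assms(1,3)])
  show "(\<lambda>N. vnorm \<psi> * (hs_norm (X N) * vnorm \<phi>)) \<longlonglongrightarrow> 0"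
    using tendsto_mult[OF tendsto_const tendsto_mult[OF assms(2) tendsto_const]] by simp
qed

lemma vinner_mv_hs_limit:
  assumes "\<And>N. hilbert_schmidt (X N)" "hilbert_schmidt L"
    and "(\<lambda>N. hs_norm (mdiff (X N) L)) \<longlonglongrightarrow> 0" "ell2 y"
  shows "(\<lambda>N. vinner y (mv (X N) y)) \<longlonglongrightarrow> vinner y (mv L y)"
proof -
  have hd: "hilbert_schmidt (mdiff (X N) L)" for N
    by (rule hilbert_schmidt_mdiff[OF assms(1,2)])
  have e: "vinner y (mv (mdiff (X N) L) y) = vinner y (mv (X N) y) - vinner y (mv L y)" for N
    using vinner_mv_lincomb[OF assms(1,2) assms(4) assms(4), of N "-1"] by (simp add: mdiff_def)
  have "(\<lambda>N. vinner y (mv (mdiff (X N) L) y)) \<longlonglongrightarrow> 0"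
  proof (rule Lim_null_comparison)
    show "\<forall>\<^sub>F N in sequentially. norm (vinner y (mv (mdiff (X N) L) y))
        \<le> vnorm y * (hs_norm (mdiff (X N) L) * vnorm y)"
      using norm_vinner_mv_le[OF hd assms(4) assms(4)] by simp
    show "(\<lambda>N. vnorm y * (hs_norm (mdiff (X N) L) * vnorm y)) \<longlonglongrightarrow> 0"
      using tendsto_mult[OF tendsto_const tendsto_mult[OF assms(3) tendsto_const]] by simp
  qed
  then show ?thesis unfolding e by (simp add: LIM_zero_iff)
qed

lemma pos_op_hs_limit:
  assumes "\<And>N. pos_op (X N)" "\<And>N. hilbert_schmidt (X N)" "hilbert_schmidt L"
    and "(\<lambda>N. hs_norm (mdiff (X N) L)) \<longlonglongrightarrow> 0"
  shows "pos_op L"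
  unfolding pos_op_def
proof (intro allI impI conjI)
  fix y assume y: "ell2 y"
  have lim: "(\<lambda>N. vinner y (mv (X N) y)) \<longlonglongrightarrow> vinner y (mv L y)"
    by (rule vinner_mv_hs_limit[OF assms(2-4) y])
  have p: "Im (vinner y (mv (X N) y)) = 0" "0 \<le> Re (vinner y (mv (X N) y))" for N
    using assms(1)[of N] y unfolding pos_op_def complex_is_Real_iff by blast+
  have "(\<lambda>N. Im (vinner y (mv (X N) y))) \<longlonglongrightarrow> Im (vinner y (mv L y))"
    by (rule tendsto_Im[OF lim])
  then have "Im (vinner y (mv L y)) = 0"
    unfolding p(1) by (rule LIMSEQ_unique[OF tendsto_const, symmetric])
  then show "vinner y (mv L y) \<in> \<real>" by (simp add: complex_is_Real_iff)
  show "0 \<le> Re (vinner y (mv L y))"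
    by (rule LIMSEQ_le_const[OF tendsto_Re[OF lim]]) (use p(2) in blast)
qed

section \<open>Positive matrices\<close>

lemma Cauchy_Schwarz_of_quadratic_nonneg:
  fixes p r :: real and q :: complex
  assumes h: "\<And>t. 0 \<le> p + 2 * Re (t * q) + (cmod t)\<^sup>2 * r" and r: "0 \<le> r"
  shows "(cmod q)\<^sup>2 \<le> p * r"
proof (cases "r = 0")
  case True
  show ?thesis
  proof (cases "q = 0")
    case True then show ?thesis using h[of 0] r by simp
  next
    case False
    define l where "l = (\<bar>p\<bar> + 1) / (2 * (cmod q)\<^sup>2)"
    have qq: "0 < (cmod q)\<^sup>2" using False by simp
    have "Re (- (complex_of_real l * cnj q) * q) = - l * (cmod q)\<^sup>2"
      using cmod_power2[of q] by (simp add: power2_eq_square algebra_simps)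
    then have "0 \<le> p - 2 * (l * (cmod q)\<^sup>2)"
      using h[of "- (complex_of_real l * cnj q)"] True by simp
    also have "l * (cmod q)\<^sup>2 = (\<bar>p\<bar> + 1) / 2" unfolding l_def using qq by simp
    finally show ?thesis by simp
  qed
next
  case False
  then have r0: "0 < r" using r by simp
  define t where "t = - cnj q / complex_of_real r"
  have "0 \<le> p + 2 * Re (t * q) + (cmod t)\<^sup>2 * r" by (rule h)
  also have "Re (t * q) = - (cmod q)\<^sup>2 / r"
    unfolding t_def by (simp add: cnj_mult_self mult.commute[of "cnj q"])
  also have "(cmod t)\<^sup>2 * r = (cmod q)\<^sup>2 / r"
    unfolding t_def using r0 by (simp add: norm_divide power_divide power2_eq_square)
  finally have "0 \<le> p - (cmod q)\<^sup>2 / r" by simp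
  then show ?thesis using r0 by (simp add: field_simps)
qed

definition qform :: "nat \<Rightarrow> mat \<Rightarrow> vec \<Rightarrow> complex" where
  "qform n M y = (\<Sum>a<n. \<Sum>b<n. cnj (y a) * M a b * y b)"

lemma ell2_finite_support: "(\<And>j. j \<ge> n \<Longrightarrow> y j = 0) \<Longrightarrow> ell2 y"
  unfolding ell2_def by (rule sums_summable[OF sums_finite[of "{..<n}"]]) auto

lemma vinner_mv_eq_qform:
  assumes "\<And>j. j \<ge> n \<Longrightarrow> y j = 0"
  shows "vinner y (mv M y) = qform n M y"
proof -
  have m: "mv M y i = (\<Sum>b<n. M i b * y b)" for i
    unfolding mv_def by (rule suminf_finite) (simp_all add: assms)
  have "vinner y (mv M y) = (\<Sum>a<n. cnj (y a) * mv M y a)"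
    unfolding vinner_def by (rule suminf_finite) (simp_all add: assms)
  also have "\<dots> = qform n M y"
    unfolding qform_def m by (simp add: sum_distrib_left mult.assoc)
  finally show ?thesis .
qed

lemma qform_truncate: "qform n M (\<lambda>a. if a < n then y a else 0) = qform n M y"
  unfolding qform_def by (intro sum.cong refl) simp

lemma pos_op_qform:
  assumes "pos_op M"
  shows "qform n M y \<in> \<real>" "0 \<le> Re (qform n M y)"
proof -
  let ?y = "\<lambda>a. if a < n then y a else 0"
  have e: "vinner ?y (mv M ?y) = qform n M y"
    using vinner_mv_eq_qform[of n "\<lambda>a. if a < n then y a else 0" M]
    by (simp add: qform_truncate)
  have "ell2 ?y" by (rule ell2_finite_support[of n]) simp
  then have "vinner ?y (mv M ?y) \<in> \<real> \<and> 0 \<le> Re (vinner ?y (mv M ?y))"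
    using assms unfolding pos_op_def by blast
  then show "qform n M y \<in> \<real>" "0 \<le> Re (qform n M y)" unfolding e by auto
qed

lemma sum_delta_right:
  fixes j n :: nat
  assumes "j < n"
  shows "(\<Sum>b<n. f b * (t * (if b = j then 1 else 0))) = f j * (t::complex)"
proof -
  have "(\<Sum>b<n. f b * (t * (if b = j then 1 else 0))) = (\<Sum>b<n. if b = j then f j * t else 0)"
    by (rule sum.cong) auto
  also have "\<dots> = f j * t" using assms by simp
  finally show ?thesis .
qed

lemma sum_delta_left:
  fixes j n :: nat
  assumes "j < n"
  shows "(\<Sum>b<n. (t * (if b = j then 1 else 0)) * f b) = (t::complex) * f j"
proof -
  have "(\<Sum>b<n. (t * (if b = j then 1 else 0)) * f b) = (\<Sum>b<n. if b = j then t * f j else 0)"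
    by (rule sum.cong) auto
  also have "\<dots> = t * f j" using assms by simp
  finally show ?thesis .
qed

lemma qform_add_delta:
  assumes "j < n"
  shows "qform n M (\<lambda>k. y k + t * (if k = j then 1 else 0)) =
    qform n M y + cnj t * (\<Sum>b<n. M j b * y b) + t * (\<Sum>a<n. cnj (y a) * M a j) + cnj t * t * M j j"
proof -
  define d where "d k = t * (if k = j then 1 else (0::complex))" for k
  define e where "e k = cnj t * (if k = j then 1 else (0::complex))" for k
  have cd: "cnj (d k) = e k" for k by (simp add: d_def e_def)
  have "qform n M (\<lambda>k. y k + d k) =
     (\<Sum>a<n. (\<Sum>b<n. cnj (y a) * M a b * y b) + (\<Sum>b<n. (cnj (y a) * M a b) * d b)
        + (\<Sum>b<n. e a * (M a b * y b)) + (\<Sum>b<n. e a * (M a b * d b)))"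
    unfolding qform_def by (intro sum.cong refl) (simp add: cd sum.distrib[symmetric] algebra_simps)
  also have "\<dots> = qform n M y + (\<Sum>a<n. (cnj (y a) * M a j) * t) + (\<Sum>a<n. e a * (\<Sum>b<n. M a b * y b))
        + (\<Sum>a<n. e a * (M a j * t))"
    unfolding qform_def sum.distrib d_def using assms
    by (simp add: sum_delta_right sum_distrib_left[symmetric])
  also have "\<dots> = qform n M y + t * (\<Sum>a<n. cnj (y a) * M a j) + cnj t * (\<Sum>b<n. M j b * y b)
        + cnj t * (M j j * t)"
    unfolding e_def sum_delta_left[OF assms] by (simp add: sum_distrib_left[symmetric] mult.commute)
  also have "\<dots> = qform n M y + cnj t * (\<Sum>b<n. M j b * y b) + t * (\<Sum>a<n. cnj (y a) * M a j) + cnj t * t * M j j"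
    by (simp add: algebra_simps)
  finally show ?thesis unfolding d_def .
qed

lemma qform_zero: "qform n M (\<lambda>k. 0) = 0" unfolding qform_def by simp

lemma qform_delta:
  assumes "a < n" shows "qform n M (\<lambda>k. s * (if k = a then 1 else 0)) = cnj s * s * M a a"
  using qform_add_delta[OF assms, of M "\<lambda>k. 0" s] by (simp add: qform_zero)

lemma qform_two_deltas:
  assumes "a < n" "b < n"
  shows "qform n M (\<lambda>k. s * (if k = a then 1 else 0) + t * (if k = b then 1 else 0)) =
     cnj s * s * M a a + cnj t * (M b a * s) + t * (cnj s * M a b) + cnj t * t * M b b"
proof -
  have c: "(\<Sum>a'<n. cnj (s * (if a' = a then 1 else 0)) * M a' b) = cnj s * M a b"
  proof -
    have "(\<Sum>a'<n. cnj (s * (if a' = a then 1 else 0)) * M a' b) = (\<Sum>a'<n. (cnj s * (if a' = a then 1 else 0)) * M a' b)"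
      by (rule sum.cong) auto
    then show ?thesis using sum_delta_left[OF assms(1), of "cnj s" "\<lambda>a'. M a' b"] by simp
  qed
  show ?thesis
    using qform_add_delta[OF assms(2), of M "\<lambda>k. s * (if k = a then 1 else 0)" t]
    unfolding qform_delta[OF assms(1)] sum_delta_right[OF assms(1)] c .
qed

lemma hermitian_if_qform_real:
  assumes real: "\<And>y. qform n M y \<in> \<real>" and ab: "a < n" "b < n"
  shows "M b a = cnj (M a b)"
proof -
  have d: "M c c \<in> \<real>" if "c < n" for c
    using real[of "\<lambda>k. 1 * (if k = c then 1 else 0)"] unfolding qform_delta[OF that, of M 1]
    by simp
  have r1: "M a a + M b a + M a b + M b b \<in> \<real>"
    using real[of "\<lambda>k. 1 * (if k = a then 1 else 0) + 1 * (if k = b then 1 else 0)"]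
    unfolding qform_two_deltas[OF ab, of M 1 1] by (simp add: add.assoc)
  have r2: "M a a - \<i> * M b a + \<i> * M a b + M b b \<in> \<real>"
    using real[of "\<lambda>k. 1 * (if k = a then 1 else 0) + \<i> * (if k = b then 1 else 0)"]
    unfolding qform_two_deltas[OF ab, of M 1 \<i>] by (simp add: add.assoc)
  have "Im (M a a + M b a + M a b + M b b) = 0" using r1 by (simp add: complex_is_Real_iff)
  moreover have "Im (M a a - \<i> * M b a + \<i> * M a b + M b b) = 0" using r2
    by (simp add: complex_is_Real_iff)
  moreover have "Im (M a a) = 0" "Im (M b b) = 0" using d ab by (auto simp: complex_is_Real_iff)
  ultimately show ?thesis unfolding complex_eq_iff by simp
qed

lemma pos_op_hermitian: "pos_op M \<Longrightarrow> M b a = cnj (M a b)"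
  by (rule hermitian_if_qform_real[of "Suc (max a b)"]) (simp_all add: pos_op_qform less_Suc_eq_le)

lemma pos_op_diag:
  assumes "pos_op M"
  shows "M a a \<in> \<real>" "0 \<le> Re (M a a)"
  using pos_op_qform[OF assms, of "Suc a" "\<lambda>k. 1 * (if k = a then 1 else 0)"]
  unfolding qform_delta[of a "Suc a" M 1, OF lessI] by simp_all

lemma block_pos_1_iff: "block_pos 1 X \<longleftrightarrow> pos_op (X 0 0)"
proof
  assume h: "block_pos 1 X"
  show "pos_op (X 0 0)"
    unfolding pos_op_def
  proof (intro allI impI)
    fix x assume "ell2 x"
    then show "vinner x (mv (X 0 0) x) \<in> \<real> \<and> 0 \<le> Re (vinner x (mv (X 0 0) x))"
      using h[unfolded block_pos_def, rule_format, of "\<lambda>a. x"] by (simp add: Let_def)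
  qed
next
  assume "pos_op (X 0 0)"
  then show "block_pos 1 X" unfolding block_pos_def pos_op_def by (simp add: Let_def)
qed

subsection \<open>Cholesky factorisation\<close>

(* Column-by-column Cholesky factorisation L = chol L (chol L)^*, with chol L lower triangular;
   chol_rest L j is the Schur complement left after eliminating the first j columns.  A zero
   pivot yields a zero column, which is harmless: positivity then forces that column of the
   residual to vanish. *)
function chol :: "mat \<Rightarrow> nat \<Rightarrow> nat \<Rightarrow> complex" where
  "chol L i k =
    (if k < i then
       (if chol L k k = 0 then 0
        else (L i k - (\<Sum>m<k. chol L i m * cnj (chol L k m))) / chol L k k)
     else if k = i then complex_of_real (sqrt (Re (L i i - (\<Sum>m<i. chol L i m * cnj (chol L i m)))))
     else 0)"
  by pat_completeness auto
termination
  by (relation "inv_image (less_than <*lex*> less_than) (\<lambda>(L,i,k). (i,k))")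
    (simp_all add: wf_inv_image wf_lex_prod)

declare chol.simps[simp del]

definition chol_rest :: "mat \<Rightarrow> nat \<Rightarrow> mat" where
  "chol_rest L j a b = L a b - (\<Sum>m<j. chol L a m * cnj (chol L b m))"

lemma chol_eq:
  "chol L i k = (if k < i then (if chol L k k = 0 then 0 else chol_rest L k i k / chol L k k)
     else if k = i then complex_of_real (sqrt (Re (chol_rest L i i i))) else 0)"
  unfolding chol_rest_def by (subst chol.simps) simp

lemma chol_diag: "chol L k k = complex_of_real (sqrt (Re (chol_rest L k k k)))"
  by (subst chol_eq) simp

lemma chol_above: "i < k \<Longrightarrow> chol L i k = 0"
  by (subst chol_eq) simp

lemma chol_below:
  "k < i \<Longrightarrow> chol L i k = (if chol L k k = 0 then 0 else chol_rest L k i k / chol L k k)"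
  by (subst chol_eq) simp

lemma cnj_chol_diag: "cnj (chol L k k) = chol L k k"
  unfolding chol_diag by simp

lemma chol_rest_Suc: "chol_rest L (Suc j) a b = chol_rest L j a b - chol L a j * cnj (chol L b j)"
  unfolding chol_rest_def sum.lessThan_Suc by (simp only: diff_diff_eq)

lemma chol_rest_hermitian:
  assumes "\<And>a b. L b a = cnj (L a b)"
  shows "chol_rest L j b a = cnj (chol_rest L j a b)"
proof -
  have "cnj (\<Sum>m<j. chol L a m * cnj (chol L b m)) = (\<Sum>m<j. chol L b m * cnj (chol L a m))"
    by (simp only: cnj_sum complex_cnj_mult complex_cnj_cnj mult.commute)
  moreover have "L b a = cnj (L a b)" by (rule assms)
  ultimately show ?thesis unfolding chol_rest_def complex_cnj_diff by (simp only:)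
qed


lemma qform_zero_support:
  "(\<And>a. a < n \<Longrightarrow> y a = 0) \<Longrightarrow> qform n M y = 0"
  unfolding qform_def by (intro sum.neutral ballI) simp

lemma qform_minus_rank_one:
  "qform n (\<lambda>a b. M a b - u a * cnj (u b)) y
    = qform n M y - (\<Sum>a<n. cnj (y a) * u a) * cnj (\<Sum>a<n. cnj (y a) * u a)"
proof -
  have "qform n (\<lambda>a b. M a b - u a * cnj (u b)) y
      = (\<Sum>a<n. \<Sum>b<n. cnj (y a) * M a b * y b - (cnj (y a) * u a) * (cnj (u b) * y b))"
    unfolding qform_def by (intro sum.cong refl) (simp add: algebra_simps)
  also have "\<dots> = qform n M y - (\<Sum>a<n. cnj (y a) * u a) * (\<Sum>b<n. cnj (u b) * y b)"
    unfolding qform_def by (simp add: sum_subtractf sum_product)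
  also have "(\<Sum>b<n. cnj (u b) * y b) = cnj (\<Sum>a<n. cnj (y a) * u a)"
    by (simp add: mult.commute)
  finally show ?thesis .
qed

lemma psd_diag_nonneg:
  assumes psd: "\<And>y. (\<forall>a<j. y a = 0) \<Longrightarrow> 0 \<le> Re (qform (Suc j) M y)"
    and herm: "M j j = cnj (M j j)"
  shows "M j j = complex_of_real (Re (M j j))" "0 \<le> Re (M j j)"
proof -
  show "M j j = complex_of_real (Re (M j j))" using herm by (simp add: complex_eq_iff)
  show "0 \<le> Re (M j j)"
    using psd[of "\<lambda>k. 1 * (if k = j then 1 else 0)"] unfolding qform_delta[OF lessI] by simp
qed

lemma psd_zero_diag_column:
  assumes psd: "\<And>y. (\<forall>k<j. y k = 0) \<Longrightarrow> 0 \<le> Re (qform n M y)"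
    and jn: "j < n" and an: "a < n" and ja: "j < a"
    and z: "M j j = 0" and hja: "M j a = cnj (M a j)" and ha: "M a a = complex_of_real m" and m: "0 \<le> m"
  shows "M a j = 0"
proof -
  have "(cmod (cnj (M a j)))\<^sup>2 \<le> 0 * m"
  proof (rule Cauchy_Schwarz_of_quadratic_nonneg)
    fix t
    have "0 \<le> Re (qform n M (\<lambda>k. 1 * (if k = j then 1 else 0) + t * (if k = a then 1 else 0)))"
      by (rule psd) (use ja in auto)
    also have "\<dots> = 0 + 2 * Re (t * cnj (M a j)) + (cmod t)\<^sup>2 * m"
      unfolding qform_two_deltas[OF jn an] z hja ha
      by (simp add: cmod_power2 algebra_simps) (simp add: power2_eq_square)
    finally show "0 \<le> 0 + 2 * Re (t * cnj (M a j)) + (cmod t)\<^sup>2 * m" .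
  qed (rule m)
  then show ?thesis by simp
qed

lemma qform_complete_square:
  assumes "j < n" "\<And>a b. M b a = cnj (M a b)" "g \<noteq> 0" "cnj g = g" "M j j = g * g"
  shows "qform n M (\<lambda>k. y k + (- (\<Sum>b<n. M j b * y b) / (g * g)) * (if k = j then 1 else 0))
    = qform n M y - (\<Sum>a<n. cnj (y a) * M a j / g) * cnj (\<Sum>a<n. cnj (y a) * M a j / g)"
proof -
  let ?w = "\<Sum>b<n. M j b * y b" and ?c = "\<Sum>a<n. cnj (y a) * M a j"
  have pc: "(\<Sum>a<n. cnj (y a) * M a j / g) = ?c / g" by (simp add: sum_divide_distrib)
  have "cnj (y a) * M a j = cnj (M j a * y a)" for a
    using assms(2)[of a j] by (simp only: complex_cnj_mult mult.commute)
  then have cw: "?c = cnj ?w" by (simp only: cnj_sum)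
  have "qform n M (\<lambda>k. y k + (- ?w / (g * g)) * (if k = j then 1 else 0))
      = qform n M y + cnj (- ?w / (g * g)) * ?w + (- ?w / (g * g)) * ?c
        + cnj (- ?w / (g * g)) * (- ?w / (g * g)) * (g * g)"
    unfolding qform_add_delta[OF assms(1)] assms(5) ..
  also have "\<dots> = qform n M y - (?c / g) * cnj (?c / g)"
    unfolding cw using assms(3,4) by (simp add: field_simps)
  finally show ?thesis unfolding pc .
qed

context
  fixes L :: mat
  assumes herm: "\<And>a b. L b a = cnj (L a b)"
    and psd0: "\<And>n y. 0 \<le> Re (qform n L y)"
begin

(* Each elimination step is a completion of the square: for y vanishing below j + 1,
   the residual form at y equals the previous residual form at y + t e_j for a suitable t. *)
lemma psd_chol_rest:
  "(\<forall>a<j. y a = 0) \<Longrightarrow> 0 \<le> Re (qform n (chol_rest L j) y)"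
proof (induct j arbitrary: n y)
  case 0
  have "chol_rest L 0 = L" by (intro ext) (simp add: chol_rest_def)
  then show ?case using psd0 by simp
next
  case (Suc j)
  let ?M = "chol_rest L j"
  let ?g = "chol L j j"
  have hM: "\<And>a b. ?M b a = cnj (?M a b)" by (rule chol_rest_hermitian[OF herm])
  have dg: "?M j j = complex_of_real (Re (?M j j))" "0 \<le> Re (?M j j)"
    by (rule psd_diag_nonneg[where j=j, OF Suc.hyps hM[of j j]], simp)+
  have gg: "?g * ?g = ?M j j"
    by (subst dg(1)) (simp add: chol_diag dg(2) of_real_mult[symmetric] del: of_real_mult)
  have e1: "chol_rest L (Suc j) = (\<lambda>a b. ?M a b - chol L a j * cnj (chol L b j))"
    by (intro ext) (simp add: chol_rest_Suc)
  let ?p = "\<Sum>a<n. cnj (y a) * chol L a j"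
  have Qs: "qform n (chol_rest L (Suc j)) y = qform n ?M y - ?p * cnj ?p"
    unfolding e1 by (rule qform_minus_rank_one)
  have yj: "\<And>a. a \<le> j \<Longrightarrow> y a = 0" using Suc.prems by auto
  show ?case
  proof (cases "n \<le> j")
    case True
    then show ?thesis using yj by (simp add: qform_zero_support)
  next
    case False
    then have jn: "j < n" by simp
    show ?thesis
    proof (cases "?g = 0")
      case True
      have "cnj (y a) * chol L a j = 0" for a
        by (cases "a \<le> j") (simp_all add: yj chol_below True)
      then have "?p = 0" by (intro sum.neutral ballI)
      then show ?thesis unfolding Qs using Suc.hyps[of y n] Suc.prems by simp
    next
      case False
      have "cnj (y a) * chol L a j = cnj (y a) * ?M a j / ?g" for a
        by (cases "a \<le> j") (simp_all add: yj chol_below False)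
      then have p: "?p = (\<Sum>a<n. cnj (y a) * ?M a j / ?g)" by simp
      let ?t = "- (\<Sum>b<n. ?M j b * y b) / (?g * ?g)"
      have "0 \<le> Re (qform n ?M (\<lambda>k. y k + ?t * (if k = j then 1 else 0)))"
        by (rule Suc.hyps) (use Suc.prems in auto)
      then show ?thesis
        unfolding Qs p
          qform_complete_square[where M = ?M and g = ?g, OF jn hM False cnj_chol_diag gg[symmetric]] .
    qed
  qed
qed

lemma chol_rest_diag:
  "chol_rest L j j j = complex_of_real (Re (chol_rest L j j j))" "0 \<le> Re (chol_rest L j j j)"
  by (rule psd_diag_nonneg[where j=j, OF psd_chol_rest chol_rest_hermitian[OF herm]], simp)+

lemma chol_diag_sq: "chol L j j * chol L j j = chol_rest L j j j"
  by (subst chol_rest_diag(1))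
    (simp add: chol_diag chol_rest_diag(2) of_real_mult[symmetric] del: of_real_mult)

lemma chol_rest_diag_ge:
  assumes "j \<le> a"
  shows "chol_rest L j a a = complex_of_real (Re (chol_rest L j a a))"
    and "0 \<le> Re (chol_rest L j a a)"
proof -
  have p: "0 \<le> Re (qform (Suc a) (chol_rest L j) y)" if "\<forall>k<a. y k = 0" for y
    by (rule psd_chol_rest) (use that assms in auto)
  show "chol_rest L j a a = complex_of_real (Re (chol_rest L j a a))"
    and "0 \<le> Re (chol_rest L j a a)"
    by (rule psd_diag_nonneg[where j=a, OF p chol_rest_hermitian[OF herm]], assumption)+
qed

lemma chol_rest_Suc_column: "j \<le> a \<Longrightarrow> chol_rest L (Suc j) a j = 0"
proof -
  assume ja: "j \<le> a"
  show ?thesis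
  proof (cases "a = j")
    case True then show ?thesis by (simp add: chol_rest_Suc cnj_chol_diag chol_diag_sq)
  next
    case False
    then have ja': "j < a" using ja by simp
    show ?thesis
    proof (cases "chol L j j = 0")
      case False
      then show ?thesis by (simp add: chol_rest_Suc cnj_chol_diag chol_below[OF ja'])
    next
      case True
      have z: "chol_rest L j j j = 0" using chol_diag_sq[symmetric] True by simp
      have "chol_rest L j a j = 0"
        by (rule psd_zero_diag_column[where n = "Suc a" and m = "Re (chol_rest L j a a)",
              OF psd_chol_rest _ _ ja' z chol_rest_hermitian[OF herm]
              chol_rest_diag_ge(1)[OF ja] chol_rest_diag_ge(2)[OF ja]])
          (use ja in simp_all)
      then show ?thesis by (simp add: chol_rest_Suc True)
    qed
  qed
qed


lemma chol_gram_lower: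
  "j \<le> a \<Longrightarrow> L a j = (\<Sum>m<Suc j. chol L a m * cnj (chol L j m))"
  using chol_rest_Suc_column[of j a] unfolding chol_rest_def by simp

lemma sum_chol_extend:
  assumes "b < N'" "N' \<le> N"
  shows "(\<Sum>m<N. chol L a m * cnj (chol L b m)) = (\<Sum>m<N'. chol L a m * cnj (chol L b m))"
proof (rule sum.mono_neutral_right)
  show "\<forall>i\<in>{..<N} - {..<N'}. chol L a i * cnj (chol L b i) = 0"
    using assms by (auto simp: chol_above)
qed (use assms in auto)

lemma chol_gram:
  assumes "max a b < N"
  shows "L a b = (\<Sum>m<N. chol L a m * cnj (chol L b m))"
proof (cases "b \<le> a")
  case True
  then show ?thesis using chol_gram_lower[OF True] sum_chol_extend[of b "Suc b" N a] assms by simp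
next
  case False
  then have ab: "a \<le> b" by simp
  have "L a b = cnj (L b a)" by (rule herm)
  also have "L b a = (\<Sum>m<N. chol L b m * cnj (chol L a m))"
    using chol_gram_lower[OF ab] sum_chol_extend[of a "Suc a" N b] assms by simp
  also have "cnj \<dots> = (\<Sum>m<N. chol L a m * cnj (chol L b m))"
    by (simp only: cnj_sum complex_cnj_mult complex_cnj_cnj mult.commute)
  finally show ?thesis .
qed

lemma chol_gram_diag:
  "i < N \<Longrightarrow> L i i = complex_of_real (\<Sum>m<N. (cmod (chol L i m))\<^sup>2)"
proof -
  assume "i < N"
  then have "L i i = (\<Sum>m<N. chol L i m * cnj (chol L i m))" using chol_gram[of i i N] by simp
  also have "\<dots> = (\<Sum>m<N. complex_of_real ((cmod (chol L i m))\<^sup>2))"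
    by (simp only: complex_norm_square)
  also have "\<dots> = complex_of_real (\<Sum>m<N. (cmod (chol L i m))\<^sup>2)"
    by (simp only: of_real_sum)
  finally show ?thesis .
qed

lemma norm_chol_sq_le: "(cmod (chol L i k))\<^sup>2 \<le> Re (L i i)"
proof -
  have "Re (L i i) = (\<Sum>m<Suc (max i k). (cmod (chol L i m))\<^sup>2)"
    using chol_gram_diag[of i "Suc (max i k)"] by simp
  moreover have "(cmod (chol L i k))\<^sup>2 \<le> (\<Sum>m<Suc (max i k). (cmod (chol L i m))\<^sup>2)"
    by (rule member_le_sum) auto
  ultimately show ?thesis by simp
qed

lemma sum_norm_chol_row_le: "(\<Sum>k<K. (cmod (chol L i k))\<^sup>2) \<le> Re (L i i)"
proof -
  have "Re (L i i) = (\<Sum>m<max K (Suc i). (cmod (chol L i m))\<^sup>2)"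
    using chol_gram_diag[of i "max K (Suc i)"] by simp
  moreover have "(\<Sum>k<K. (cmod (chol L i k))\<^sup>2) \<le> (\<Sum>m<max K (Suc i). (cmod (chol L i m))\<^sup>2)"
    by (rule sum_mono2) auto
  ultimately show ?thesis by simp
qed

lemma chol_nuclear_rep:
  assumes sd: "summable (\<lambda>i. Re (L i i))"
  shows "nuclear_rep L (\<lambda>k i. chol L i k) (\<lambda>k i. chol L i k)"
  unfolding nuclear_rep_def
proof (intro conjI allI)
  have sk: "summable (\<lambda>i. (cmod (chol L i k))\<^sup>2)" for k
    by (rule summable_comparison_test[OF _ sd]) (auto intro: norm_chol_sq_le)
  show "ell2 (\<lambda>i. chol L i k)" for k unfolding ell2_def by (rule sk)
  then show "ell2 (\<lambda>i. chol L i k)" for k .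
  have vv: "vnorm (\<lambda>i. chol L i k) * vnorm (\<lambda>i. chol L i k) = (\<Sum>i. (cmod (chol L i k))\<^sup>2)" for k
    unfolding vnorm_def using suminf_nonneg[OF sk[of k]] by simp
  show "summable (\<lambda>k. vnorm (\<lambda>i. chol L i k) * vnorm (\<lambda>i. chol L i k))"
    unfolding vv
  proof (rule summableI_nonneg_bounded[of _ "\<Sum>i. Re (L i i)"])
    fix K
    have "(\<Sum>k<K. \<Sum>i. (cmod (chol L i k))\<^sup>2) = (\<Sum>i. \<Sum>k<K. (cmod (chol L i k))\<^sup>2)"
      by (rule suminf_sum[symmetric]) (rule sk)
    also have "\<dots> \<le> (\<Sum>i. Re (L i i))"
      by (rule suminf_le) (auto intro: sum_norm_chol_row_le summable_sum sk sd)
    finally show "(\<Sum>k<K. \<Sum>i. (cmod (chol L i k))\<^sup>2) \<le> (\<Sum>i. Re (L i i))" .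
  qed (simp add: suminf_nonneg sk)
next
  fix i j
  have "(\<lambda>k. chol L i k * cnj (chol L j k)) sums (\<Sum>k\<in>{..<Suc (max i j)}. chol L i k * cnj (chol L j k))"
    by (rule sums_finite) (auto simp: chol_above)
  then show "(\<lambda>k. chol L i k * cnj (chol L j k)) sums L i j"
    using chol_gram[of i j "Suc (max i j)"] by simp
qed

lemma psd_zero_if_diag_zero:
  assumes "\<And>i. L i i = 0"
  shows "L a b = 0"
proof -
  have "chol L i m = 0" for i m
    using norm_chol_sq_le[of i m] assms[of i] by simp
  then show ?thesis using chol_gram[of a b "Suc (max a b)"] by simp
qed

end

lemma trace_class_if_pos_op:
  assumes "pos_op L" "summable (\<lambda>i. Re (L i i))"
  shows "trace_class L"
  using chol_nuclear_rep[OF pos_op_hermitian[OF assms(1)] pos_op_qform(2)[OF assms(1)] assms(2)]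
  unfolding trace_class_def by blast

lemma pos_op_trace:
  assumes "trace_class L" "pos_op L"
  shows "summable (\<lambda>i. Re (L i i))" "trace L = of_real (\<Sum>i. Re (L i i))"
proof -
  have s: "summable (\<lambda>i. L i i)"
    by (rule summable_norm_cancel[OF trace_class_diag_summable[OF assms(1)]])
  show r: "summable (\<lambda>i. Re (L i i))" by (rule summable_Re[OF s])
  have "L i i = of_real (Re (L i i))" for i
    using pos_op_diag(1)[OF assms(2)] by (simp add: complex_is_Real_iff complex_eq_iff)
  then have "trace L = (\<Sum>i. of_real (Re (L i i)))"
    unfolding trace_def by metis
  then show "trace L = of_real (\<Sum>i. Re (L i i))"
    using suminf_of_real[OF r, where 'a = complex] by simp
qed

lemma pos_op_trace_pos:
  assumes "trace_class L" "pos_op L" "L \<noteq> (\<lambda>i j. 0)"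
  shows "0 < (\<Sum>i. Re (L i i))"
proof -
  obtain i0 where i0: "L i0 i0 \<noteq> 0"
  proof (rule ccontr)
    assume "\<not> thesis"
    then have "L a b = 0" for a b
      using that psd_zero_if_diag_zero[OF pos_op_hermitian[OF assms(2)] pos_op_qform(2)[OF assms(2)]]
      by blast
    then show False using assms(3) by (simp add: fun_eq_iff)
  qed
  have "0 < Re (L i0 i0)"
    using i0 pos_op_diag[OF assms(2), of i0] by (auto simp: complex_is_Real_iff complex_eq_iff)
  then show ?thesis
    using suminf_pos_iff[OF pos_op_trace(1)[OF assms(1,2)] pos_op_diag(2)[OF assms(2)]] by blast
qed

lemma mv_zero: "mv (\<lambda>i j. 0) y = (\<lambda>i. 0)"
  unfolding mv_def by simp

lemma vinner_zero: "vinner y (\<lambda>i. 0) = 0"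
  unfolding vinner_def by simp

lemma normalize_to_density:
  assumes "trace_class L" "pos_op L" "L \<noteq> (\<lambda>i j. 0)"
  obtains c where "density (\<lambda>i j. c * L i j)"
proof -
  define s where "s = (\<Sum>i. Re (L i i))"
  have s0: "0 < s" unfolding s_def by (rule pos_op_trace_pos[OF assms])
  define c where "c = complex_of_real (1 / s)"
  let ?\<rho> = "\<lambda>i j. c * L i j"
  have "trace_class ?\<rho>" by (rule trace_class_scale[OF assms(1)])
  moreover have "trace ?\<rho> = 1"
  proof -
    have "trace ?\<rho> = c * trace L"
      unfolding trace_def
      by (rule suminf_mult[OF summable_norm_cancel[OF trace_class_diag_summable[OF assms(1)]]])
    then show ?thesis using s0 pos_op_trace(2)[OF assms(1,2)] by (simp add: c_def s_def)
  qed
  moreover have "pos_op ?\<rho>"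
    unfolding pos_op_def
  proof (intro allI impI)
    fix y assume y: "ell2 y"
    have "vinner y (mv (\<lambda>i j. 0 + c * L i j) y) = vinner y (mv (\<lambda>i j. 0) y) + c * vinner y (mv L y)"
      by (rule vinner_mv_lincomb[OF hilbert_schmidt_zero trace_class_hilbert_schmidt[OF assms(1)] y y])
    then have e: "vinner y (mv ?\<rho> y) = complex_of_real (1 / s) * vinner y (mv L y)"
      by (simp add: mv_zero vinner_zero c_def)
    have "vinner y (mv L y) \<in> \<real>" "0 \<le> Re (vinner y (mv L y))"
      using assms(2) y unfolding pos_op_def by blast+
    then show "vinner y (mv ?\<rho> y) \<in> \<real> \<and> 0 \<le> Re (vinner y (mv ?\<rho> y))"
      unfolding e using s0 by (auto simp: complex_is_Real_iff)
  qed
  ultimately show ?thesis using that unfolding density_def by blast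
qed

section \<open>Channels with 0 <= Omega-bar <= 1\<close>

locale contractive_channel =
  fixes \<Omega> :: "mat \<Rightarrow> mat"
  assumes qc: "quantum_channel \<Omega>" and sb: "superop_between_0_1 \<Omega>"
begin

lemma trace_class_channel: "trace_class A \<Longrightarrow> trace_class (\<Omega> A)"
  using qc unfolding quantum_channel_def by blast

lemma channel_lincomb:
  "trace_class A \<Longrightarrow> trace_class B \<Longrightarrow>
    \<Omega> (\<lambda>i j. A i j + c * B i j) = (\<lambda>i j. \<Omega> A i j + c * \<Omega> B i j)"
  using qc unfolding quantum_channel_def by blast

lemma trace_channel: "trace_class A \<Longrightarrow> trace (\<Omega> A) = trace A"
  using qc unfolding quantum_channel_def by blast

lemma pos_op_channel: assumes "trace_class A" "pos_op A" shows "pos_op (\<Omega> A)"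
proof -
  have "block_pos 1 (\<lambda>a b. A)" unfolding block_pos_1_iff by (rule assms(2))
  then have "block_pos 1 (\<lambda>a b. \<Omega> A)"
    using qc assms(1) unfolding quantum_channel_def by simp
  then show ?thesis unfolding block_pos_1_iff .
qed

lemma density_channel: "density A \<Longrightarrow> density (\<Omega> A)"
  unfolding density_def using trace_class_channel pos_op_channel trace_channel by simp

lemma channel_zero: "\<Omega> (\<lambda>i j. 0) = (\<lambda>i j. 0)"
proof -
  have "\<Omega> (\<lambda>i j. 0 + 1 * 0) = (\<lambda>i j. \<Omega> (\<lambda>i j. 0) i j + 1 * \<Omega> (\<lambda>i j. 0) i j)"
    by (rule channel_lincomb[OF trace_class_zero trace_class_zero])
  then have "\<And>i j. \<Omega> (\<lambda>i j. 0) i j = \<Omega> (\<lambda>i j. 0) i j + \<Omega> (\<lambda>i j. 0) i j"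
    by (simp add: fun_eq_iff)
  then show ?thesis by (intro ext) simp
qed

lemma channel_scale:
  "trace_class A \<Longrightarrow> \<Omega> (\<lambda>i j. c * A i j) = (\<lambda>i j. c * \<Omega> A i j)"
  using channel_lincomb[OF trace_class_zero, of A c] by (simp add: channel_zero)

(* sform A B is the matrix element <A|Omega-bar|B> of the superoperator on H (x) H. *)
definition sform :: "mat \<Rightarrow> mat \<Rightarrow> complex" where
  "sform A B = hs_inner A (\<Omega> B)"

lemma sform_diag:
  assumes "trace_class A"
  shows "sform A A \<in> \<real>" "0 \<le> Re (sform A A)" "Re (sform A A) \<le> hs_sqnorm A"
  using sb assms unfolding superop_between_0_1_def sform_def power2_hs_norm by simp_all

lemma sform_lincomb:
  assumes x: "trace_class x" and y: "trace_class y"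
  shows "sform (\<lambda>i j. x i j + t * y i j) (\<lambda>i j. x i j + t * y i j) =
      sform x x + t * sform x y + cnj t * sform y x + cnj t * t * sform y y"
proof -
  let ?z = "\<lambda>i j. x i j + t * y i j" and ?Oz = "\<lambda>i j. \<Omega> x i j + t * \<Omega> y i j"
  have hx: "hilbert_schmidt x" "hilbert_schmidt y" "hilbert_schmidt (\<Omega> x)" "hilbert_schmidt (\<Omega> y)"
    using x y trace_class_channel trace_class_hilbert_schmidt by blast+
  have hz: "hilbert_schmidt ?Oz" by (rule hilbert_schmidt_lincomb[OF hx(3,4)])
  have "sform ?z ?z = hs_inner ?z ?Oz"
    unfolding sform_def channel_lincomb[OF x y] ..
  also have "\<dots> = hs_inner x ?Oz + cnj t * hs_inner y ?Oz"
    by (rule hs_inner_lincomb_left[OF hz hx(1,2)])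
  also have "\<dots> = sform x x + t * sform x y + cnj t * (sform y x + t * sform y y)"
    unfolding sform_def hs_inner_lincomb_right[OF hx(1,3,4)] hs_inner_lincomb_right[OF hx(2,3,4)] ..
  finally show ?thesis by (simp add: algebra_simps)
qed

lemma sform_hermitian:
  assumes x: "trace_class x" and y: "trace_class y"
  shows "sform y x = cnj (sform x y)"
proof -
  have r: "Im (sform x x + t * sform x y + cnj t * sform y x + cnj t * t * sform y y) = 0" for t
    using sform_diag(1)[OF trace_class_lincomb[OF x y]]
    unfolding sform_lincomb[OF x y] by (simp only: complex_is_Real_iff)
  have dx: "Im (sform x x) = 0" "Im (sform y y) = 0"
    using sform_diag(1)[OF x] sform_diag(1)[OF y] by (auto simp: complex_is_Real_iff)
  have "Im (sform x y) + Im (sform y x) = 0" using r[of 1] dx by simp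
  moreover have "Re (sform x y) - Re (sform y x) = 0" using r[of \<i>] dx by simp
  ultimately show ?thesis by (simp add: complex_eq_iff)
qed

lemma sform_Cauchy_Schwarz:
  assumes x: "trace_class x" and y: "trace_class y"
  shows "(cmod (sform x y))\<^sup>2 \<le> Re (sform x x) * Re (sform y y)"
proof (rule Cauchy_Schwarz_of_quadratic_nonneg)
  show "0 \<le> Re (sform y y)" by (rule sform_diag(2)[OF y])
  fix t
  have "0 \<le> Re (sform (\<lambda>i j. x i j + t * y i j) (\<lambda>i j. x i j + t * y i j))"
    by (rule sform_diag(2)[OF trace_class_lincomb[OF x y]])
  also have "\<dots> = Re (sform x x) + 2 * Re (t * sform x y) + (cmod t)\<^sup>2 * Re (sform y y)"
  proof -
    have "Re (cnj t * sform y x) = Re (t * sform x y)"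
      unfolding sform_hermitian[OF x y] complex_cnj_mult[symmetric] by simp
    moreover have "Re (cnj t * t * sform y y) = (cmod t)\<^sup>2 * Re (sform y y)"
      using sform_diag(1)[OF y] by (simp add: cnj_mult_self complex_is_Real_iff)
    ultimately show ?thesis unfolding sform_lincomb[OF x y] by simp
  qed
  finally show "0 \<le> Re (sform x x) + 2 * Re (t * sform x y) + (cmod t)\<^sup>2 * Re (sform y y)" .
qed

(* ||Omega x||^2 = <Omega x|Omega-bar|x> <= sqrt (<Omega x|Omega-bar|Omega x> <x|Omega-bar|x>),
   and the first factor is at most ||Omega x||^2 since Omega-bar <= 1. *)
lemma hs_sqnorm_channel_le:
  assumes x: "trace_class x"
  shows "hs_sqnorm (\<Omega> x) \<le> Re (sform x x)"
proof -
  have ox: "trace_class (\<Omega> x)" by (rule trace_class_channel[OF x])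
  have e: "sform (\<Omega> x) x = complex_of_real (hs_sqnorm (\<Omega> x))"
    unfolding sform_def by (rule hs_inner_self[OF trace_class_hilbert_schmidt[OF ox]])
  have "(hs_sqnorm (\<Omega> x))\<^sup>2 \<le> Re (sform (\<Omega> x) (\<Omega> x)) * Re (sform x x)"
    using sform_Cauchy_Schwarz[OF ox x] unfolding e by (simp add: hs_sqnorm_nonneg)
  also have "\<dots> \<le> hs_sqnorm (\<Omega> x) * Re (sform x x)"
    using sform_diag[OF ox] sform_diag(2)[OF x] by (intro mult_right_mono) auto
  finally have "hs_sqnorm (\<Omega> x) * hs_sqnorm (\<Omega> x) \<le> hs_sqnorm (\<Omega> x) * Re (sform x x)"
    by (simp add: power2_eq_square)
  then show ?thesis
    using hs_sqnorm_nonneg[of "\<Omega> x"] sform_diag(2)[OF x]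
    by (cases "hs_sqnorm (\<Omega> x) = 0") auto
qed

lemma hs_norm_channel_le:
  assumes "trace_class x"
  shows "hs_norm (\<Omega> x) \<le> hs_norm x"
  using hs_sqnorm_channel_le[OF assms] sform_diag(3)[OF assms] unfolding hs_norm_eq_sqrt by simp

end

section \<open>Orbits of a density matrix\<close>

locale channel_orbit = contractive_channel +
  fixes \<sigma> :: mat
  assumes dens: "density \<sigma>"
begin

definition orbit :: "nat \<Rightarrow> mat" where "orbit N = (\<Omega> ^^ N) \<sigma>"

lemma orbit_Suc: "orbit (Suc N) = \<Omega> (orbit N)" unfolding orbit_def by simp

lemma density_orbit: "density (orbit N)"
  by (induction N) (simp_all add: orbit_def dens density_channel)

lemma trace_class_orbit: "trace_class (orbit N)"
  using density_orbit unfolding density_def by blast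

lemma pos_op_orbit: "pos_op (orbit N)"
  using density_orbit unfolding density_def by blast

lemma hilbert_schmidt_orbit: "hilbert_schmidt (orbit N)"
  by (rule trace_class_hilbert_schmidt[OF trace_class_orbit])

definition corr :: "nat \<Rightarrow> complex" where "corr s = hs_inner \<sigma> (orbit s)"

lemma hs_inner_orbit_Suc: "hs_inner (orbit (Suc N)) (orbit M) = hs_inner (orbit N) (orbit (Suc M))"
proof -
  have "hs_inner (orbit (Suc N)) (orbit M) = cnj (hs_inner (orbit M) (orbit (Suc N)))"
    by (rule hs_inner_swap)
  also have "hs_inner (orbit M) (orbit (Suc N)) = sform (orbit M) (orbit N)"
    unfolding sform_def orbit_Suc ..
  also have "cnj \<dots> = sform (orbit N) (orbit M)"
    using sform_hermitian[OF trace_class_orbit trace_class_orbit, of N M] by simp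
  also have "\<dots> = hs_inner (orbit N) (orbit (Suc M))" unfolding sform_def orbit_Suc ..
  finally show ?thesis .
qed

lemma hs_inner_orbit: "hs_inner (orbit N) (orbit M) = corr (N + M)"
proof (induct N arbitrary: M)
  case 0 then show ?case by (simp add: corr_def orbit_def)
next
  case (Suc N)
  then show ?case using hs_inner_orbit_Suc[of N M] Suc[of "Suc M"] by simp
qed

definition corr_re :: "nat \<Rightarrow> real" where "corr_re s = Re (corr s)"

lemma corr_even: "corr (2 * m) = complex_of_real (hs_sqnorm (orbit m))"
  using hs_inner_orbit[of m m] hs_inner_self[OF hilbert_schmidt_orbit, of m] by (simp add: mult_2)

lemma corr_odd: "corr (2 * m + 1) = sform (orbit m) (orbit m)"
  using hs_inner_orbit[of m "Suc m"] by (simp add: sform_def orbit_Suc mult_2)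

lemma corr_re_nonneg: "0 \<le> corr_re s"
proof (cases "even s")
  case True
  then obtain m where "s = 2 * m" by blast
  then show ?thesis by (simp add: corr_re_def corr_even hs_sqnorm_nonneg)
next
  case False
  then obtain m where s: "s = 2 * m + 1" using oddE by blast
  show ?thesis unfolding s corr_re_def corr_odd using sform_diag[OF trace_class_orbit] by blast
qed

lemma corr_re_Suc_le: "corr_re (Suc s) \<le> corr_re s"
proof (cases "even s")
  case True
  then obtain m where s: "s = 2 * m" by blast
  show ?thesis unfolding s corr_re_def using sform_diag[OF trace_class_orbit, of m]
    by (simp add: corr_even corr_odd[simplified])
next
  case False
  then obtain m where s: "s = 2 * m + 1" using oddE by blast
  have "Suc s = 2 * Suc m" using s by simp
  then have "corr_re (Suc s) = Re (corr (2 * Suc m))" by (simp only: corr_re_def)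
  also have "\<dots> = hs_sqnorm (\<Omega> (orbit m))"
    by (simp only: corr_even orbit_Suc Re_complex_of_real)
  finally have "corr_re (Suc s) = hs_sqnorm (\<Omega> (orbit m))" .
  also have "\<dots> \<le> Re (sform (orbit m) (orbit m))"
    by (rule hs_sqnorm_channel_le[OF trace_class_orbit])
  also have "\<dots> = corr_re s" unfolding s corr_re_def corr_odd ..
  finally show ?thesis .
qed

lemma corr_re_converges:
  obtains \<beta> where "corr_re \<longlonglongrightarrow> \<beta>" "\<And>s. \<beta> \<le> corr_re s"
proof -
  have "decseq corr_re" by (rule decseq_SucI) (rule corr_re_Suc_le)
  then obtain \<beta> where "corr_re \<longlonglongrightarrow> \<beta>" "\<forall>i. \<beta> \<le> corr_re i"
    using decseq_convergent[of corr_re 0] corr_re_nonneg by blast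
  then show ?thesis using that by blast
qed

lemma hs_sqnorm_orbit_diff:
  "hs_sqnorm (mdiff (orbit N) (orbit M)) = corr_re (2 * N) + corr_re (2 * M) - 2 * corr_re (N + M)"
  unfolding hs_sqnorm_mdiff[OF hilbert_schmidt_orbit hilbert_schmidt_orbit] hs_inner_orbit corr_re_def
  by (simp only: mult_2)

lemma orbit_hs_Cauchy:
  assumes "0 < e"
  shows "\<exists>K. \<forall>N\<ge>K. \<forall>M\<ge>K. hs_sqnorm (mdiff (orbit N) (orbit M)) < e"
proof -
  obtain \<beta> where "corr_re \<longlonglongrightarrow> \<beta>" and \<beta>: "\<And>s. \<beta> \<le> corr_re s"
    using corr_re_converges by blast
  then have "\<forall>\<^sub>F s in sequentially. corr_re s < \<beta> + e / 2"
    using assms by (intro order_tendstoD(2)) auto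
  then obtain K where K: "\<And>s. s \<ge> K \<Longrightarrow> corr_re s < \<beta> + e / 2"
    unfolding eventually_sequentially by blast
  have "hs_sqnorm (mdiff (orbit N) (orbit M)) < e" if "K \<le> N" "K \<le> M" for N M
    unfolding hs_sqnorm_orbit_diff using K[of "2 * N"] K[of "2 * M"] \<beta>[of "N + M"] that
    by simp
  then show ?thesis by blast
qed

abbreviation orbit_lim :: mat where
  "orbit_lim \<equiv> entrywise_lim orbit"

lemma orbit_entry_tendsto: "(\<lambda>N. orbit N i j) \<longlonglongrightarrow> orbit_lim i j"
  by (rule entrywise_lim_tendsto[OF hilbert_schmidt_orbit orbit_hs_Cauchy])

lemma hilbert_schmidt_orbit_lim: "hilbert_schmidt orbit_lim"
  by (rule hilbert_schmidt_entrywise_lim[OF hilbert_schmidt_orbit orbit_hs_Cauchy])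

lemma hs_norm_orbit_diff_tendsto:
  "(\<lambda>N. hs_norm (mdiff (orbit N) orbit_lim)) \<longlonglongrightarrow> 0"
  by (rule hs_norm_tendsto_entrywise_lim[OF hilbert_schmidt_orbit orbit_hs_Cauchy])

lemma hilbert_schmidt_orbit_diff_lim: "hilbert_schmidt (mdiff (orbit N) orbit_lim)"
  by (rule hilbert_schmidt_mdiff[OF hilbert_schmidt_orbit hilbert_schmidt_orbit_lim])

lemma pos_op_orbit_lim: "pos_op orbit_lim"
  by (rule pos_op_hs_limit[OF pos_op_orbit hilbert_schmidt_orbit hilbert_schmidt_orbit_lim
        hs_norm_orbit_diff_tendsto])

lemma sum_diag_orbit_le_1: "(\<Sum>i<n. Re (orbit N i i)) \<le> 1"
proof -
  have "(\<Sum>i<n. Re (orbit N i i)) \<le> (\<Sum>i. Re (orbit N i i))"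
    by (rule sum_le_suminf[OF pos_op_trace(1)[OF trace_class_orbit pos_op_orbit]])
      (simp_all add: pos_op_diag(2)[OF pos_op_orbit])
  also have "\<dots> = 1"
    using pos_op_trace(2)[OF trace_class_orbit pos_op_orbit] density_orbit[of N]
    by (simp add: density_def)
  finally show ?thesis .
qed

lemma orbit_lim_diag_summable: "summable (\<lambda>i. Re (orbit_lim i i))"
proof (rule summableI_nonneg_bounded[of _ 1])
  fix n
  have "(\<lambda>N. \<Sum>i<n. Re (orbit N i i)) \<longlonglongrightarrow> (\<Sum>i<n. Re (orbit_lim i i))"
    by (intro tendsto_intros orbit_entry_tendsto)
  then show "(\<Sum>i<n. Re (orbit_lim i i)) \<le> 1"
    by (rule LIMSEQ_le_const2) (use sum_diag_orbit_le_1 in \<open>intro exI allI impI; simp\<close>)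
qed (rule pos_op_diag(2)[OF pos_op_orbit_lim])

lemma trace_class_orbit_lim: "trace_class orbit_lim"
  by (rule trace_class_if_pos_op[OF pos_op_orbit_lim orbit_lim_diag_summable])

lemma channel_orbit_lim: "\<Omega> orbit_lim = orbit_lim"
proof (intro ext)
  fix i j
  let ?c = "cmod (\<Omega> orbit_lim i j - orbit_lim i j)"
  have bound: "?c \<le> hs_norm (mdiff (orbit N) orbit_lim) + hs_norm (mdiff (orbit (Suc N)) orbit_lim)" for N
  proof -
    let ?t = "mdiff orbit_lim (orbit N)"
    have t: "trace_class ?t" by (rule trace_class_mdiff[OF trace_class_orbit_lim trace_class_orbit])
    have "\<Omega> ?t = \<Omega> (\<lambda>i j. orbit_lim i j + (-1) * orbit N i j)"
      by (simp add: mdiff_def)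
    also have "\<dots> = mdiff (\<Omega> orbit_lim) (orbit (Suc N))"
      unfolding channel_lincomb[OF trace_class_orbit_lim trace_class_orbit]
      by (simp add: mdiff_def orbit_Suc)
    finally have Ot: "\<Omega> ?t = mdiff (\<Omega> orbit_lim) (orbit (Suc N))" .
    have "cmod (\<Omega> orbit_lim i j - orbit (Suc N) i j) \<le> hs_norm (\<Omega> ?t)"
      using norm_entry_le_hs_norm[OF trace_class_hilbert_schmidt[OF trace_class_channel[OF t]], of i j]
      unfolding Ot by (simp add: mdiff_def)
    also have "\<dots> \<le> hs_norm (mdiff (orbit N) orbit_lim)"
      using hs_norm_channel_le[OF t] hs_norm_mdiff_commute by simp
    finally have "cmod (\<Omega> orbit_lim i j - orbit (Suc N) i j) \<le> hs_norm (mdiff (orbit N) orbit_lim)" .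
    moreover have "cmod (orbit (Suc N) i j - orbit_lim i j) \<le> hs_norm (mdiff (orbit (Suc N)) orbit_lim)"
      using norm_entry_le_hs_norm[OF hilbert_schmidt_orbit_diff_lim, of "Suc N" i j]
      by (simp add: mdiff_def)
    ultimately show ?thesis
      using norm_triangle_ineq[of "\<Omega> orbit_lim i j - orbit (Suc N) i j" "orbit (Suc N) i j - orbit_lim i j"]
      by simp
  qed
  have "(\<lambda>N. hs_norm (mdiff (orbit N) orbit_lim) + hs_norm (mdiff (orbit (Suc N)) orbit_lim)) \<longlonglongrightarrow> 0 + 0"
    by (intro tendsto_add hs_norm_orbit_diff_tendsto LIMSEQ_Suc[OF hs_norm_orbit_diff_tendsto])
  then have "?c \<le> 0 + 0" by (rule LIMSEQ_le_const) (use bound in blast)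
  then show "\<Omega> orbit_lim i j = orbit_lim i j" by simp
qed

lemma orbit_lim_zero:
  assumes "\<forall>\<sigma>. density \<sigma> \<longrightarrow>
           \<not> (\<exists>L. trace_class L \<and> (\<lambda>N. trace_norm (mdiff ((\<Omega> ^^ N) \<sigma>) L)) \<longlonglongrightarrow> 0)"
  shows "orbit_lim = (\<lambda>i j. 0)"
proof (rule ccontr)
  assume "orbit_lim \<noteq> (\<lambda>i j. 0)"
  then obtain c where dens: "density (\<lambda>i j. c * orbit_lim i j)"
    using normalize_to_density[OF trace_class_orbit_lim pos_op_orbit_lim] by blast
  let ?\<rho> = "\<lambda>i j. c * orbit_lim i j"
  have "\<Omega> ?\<rho> = ?\<rho>"
    unfolding channel_scale[OF trace_class_orbit_lim] channel_orbit_lim ..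
  then have "(\<Omega> ^^ N) ?\<rho> = ?\<rho>" for N by (induction N) simp_all
  then have "(\<lambda>N. trace_norm (mdiff ((\<Omega> ^^ N) ?\<rho>) ?\<rho>)) \<longlonglongrightarrow> 0"
    by (simp add: mdiff_def trace_norm_zero)
  then show False using assms dens unfolding density_def by blast
qed

end

theorem lemma2:
  fixes \<Omega> :: "mat \<Rightarrow> mat"
  assumes "quantum_channel \<Omega>"
    and "superop_between_0_1 \<Omega>"
    and "\<forall>\<sigma>. density \<sigma> \<longrightarrow>
           \<not> (\<exists>L. trace_class L \<and> (\<lambda>N. trace_norm (mdiff ((\<Omega> ^^ N) \<sigma>) L)) \<longlonglongrightarrow> 0)"
  shows "\<forall>\<sigma>. density \<sigma> \<longrightarrow>
           (\<lambda>N. hs_norm ((\<Omega> ^^ N) \<sigma>)) \<longlonglongrightarrow> 0 \<and>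
           (\<forall>\<phi> \<psi>. ell2 \<phi> \<longrightarrow> ell2 \<psi> \<longrightarrow>
              (\<lambda>N. trace (mmult ((\<Omega> ^^ N) \<sigma>) (outer \<phi> \<psi>))) \<longlonglongrightarrow> 0)"
proof (intro allI impI)
  fix \<sigma> assume "density \<sigma>"
  then interpret channel_orbit \<Omega> \<sigma> using assms(1,2) by unfold_locales
  have "mdiff (orbit N) orbit_lim = (\<Omega> ^^ N) \<sigma>" for N
    by (simp add: orbit_lim_zero[OF assms(3)] mdiff_def orbit_def)
  then have lim: "(\<lambda>N. hs_norm ((\<Omega> ^^ N) \<sigma>)) \<longlonglongrightarrow> 0"
    using hs_norm_orbit_diff_tendsto by simp
  have hs: "hilbert_schmidt ((\<Omega> ^^ N) \<sigma>)" for N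
    using hilbert_schmidt_orbit by (simp add: orbit_def)
  show "(\<lambda>N. hs_norm ((\<Omega> ^^ N) \<sigma>)) \<longlonglongrightarrow> 0 \<and>
           (\<forall>\<phi> \<psi>. ell2 \<phi> \<longrightarrow> ell2 \<psi> \<longrightarrow>
              (\<lambda>N. trace (mmult ((\<Omega> ^^ N) \<sigma>) (outer \<phi> \<psi>))) \<longlonglongrightarrow> 0)"
    using lim trace_mmult_outer_tendsto_zero[of "\<lambda>N. (\<Omega> ^^ N) \<sigma>", OF hs lim]
    by blast
qed

end
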